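(* Let $H_1,H_2,\widetilde{\mathcal H}$ be complex Hilbert spaces. Then for all nonzero $A\in\mathcal{B}_2(\widetilde{\mathcal H},H_1)$ and $B\in\mathcal{B}_2(\widetilde{\mathcal H}^{\#},H_2)$, \[ AA^*\otimes BB^*\;\succcurlyeq\;\frac{1}{\min(\operatorname{rk}AA^*,\operatorname{rk}BB^* )}\,\theta_{\mathrm{vec}(BA^\#),\mathrm{vec}(BA^\#)}\;\succcurlyeq\;0 \] as operators on $H_1\otimes H_2$, with the convention $1/\infty:=0$. Moreover, $1/\min(\operatorname{rk}AA^*,\operatorname{rk}BB^* )$ is the best possible scalar, i.e., it cannot be improved uniformly over $A,B$.
   Context: All Hilbert spaces are complex, with inner products linear in the first variable. $\mathcal{B}(H,K)\supset\mathcal{B}_2(H,K)\supset\mathcal{B}_1(H,K)$ denote bounded, Hilbert–Schmidt and trace-class operators; $\mathcal{B}_2(H,K)$ carries the inner product $\langle X,Y\rangle=\operatorname{Tr}(XY^* )$. For $x\in K$, $y\in H$, $\theta_{x,y}:H\to K$ is the rank-one operator $\theta_{x,y}w=\langle w,y\rangle x$. The conjugate space $H^\#$ of $H$ has the same additive group as $H$, scalar multiplication $\lambda\ast y:=\bar\lambda y$ and inner product $\langle x,y\rangle_{H^\#}:=\langle y,x\rangle_H$; the conjugation map $\mathcal{C}_H:H\to H^\#$, $y\mapsto\bar y$, is the identity on the underlying set (a conjugate-linear isometric bijection). For $Q\in\mathcal{B}(K,H)$, its transposition is $Q^\#:=\mathcal{C}_K Q^*\mathcal{C}_H^{-1}:H^\#\to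 K^\#$. The vectorization $\mathrm{vec}:\mathcal{B}_2(H^\#,K)\to H\otimes K$ is the isometric isomorphism determined by $\mathrm{vec}(\theta_{y,\bar x})=x\otimes y$ ($x\in H,y\in K$), extended linearly and continuously. $H\otimes K$ is the Hilbert tensor product and $P\otimes Q$ the tensor product of bounded operators. The rank $\operatorname{rk}P$ of a bounded operator is the dimension of the closure of its range. For self-adjoint operators, $X\succcurlyeq Y$ means $\langle (X-Y)x,x\rangle\ge0$ for all $x$. *)

theory Defs
  imports "HOL-Analysis.Analysis" "HOL-Library.Complex_Order" "HOL-Library.Extended_Nat"
begin

(* Concrete model: a complex Hilbert space with orthonormal basis indexed by the
   type 'i is l2('i), vectors are functions 'i => complex that are square-summable.
   The Hilbert tensor product of l2('i) and l2('j) is l2('i \<times> 'j), with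
   (x \<otimes> y)(i,j) = x i * y j. The conjugate space H# has the same carrier as H,
   so maps out of H# are modelled as conjugate-linear maps on the carrier of H. *)

definition l2 :: "('i \<Rightarrow> complex) \<Rightarrow> bool" where
  "l2 x \<longleftrightarrow> (\<lambda>i. (cmod (x i))^2) summable_on UNIV"

definition l2_inner :: "('i \<Rightarrow> complex) \<Rightarrow> ('i \<Rightarrow> complex) \<Rightarrow> complex" where
  "l2_inner x y = infsum (\<lambda>i. x i * cnj (y i)) UNIV"

definition l2_norm :: "('i \<Rightarrow> complex) \<Rightarrow> real" where
  "l2_norm x = sqrt (infsum (\<lambda>i. (cmod (x i))^2) UNIV)"

definition ket :: "'i \<Rightarrow> 'i \<Rightarrow> complex" where
  "ket k = (\<lambda>i. if i = k then 1 else 0)"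

definition tensor_vec :: "('i \<Rightarrow> complex) \<Rightarrow> ('j \<Rightarrow> complex) \<Rightarrow> ('i \<times> 'j \<Rightarrow> complex)" where
  "tensor_vec x y = (\<lambda>(i, j). x i * y j)"

(* bounded linear operator l2('a) -> l2('b) (values off l2 are irrelevant) *)
definition bounded_op :: "(('a \<Rightarrow> complex) \<Rightarrow> ('b \<Rightarrow> complex)) \<Rightarrow> bool" where
  "bounded_op T \<longleftrightarrow>
     (\<forall>x. l2 x \<longrightarrow> l2 (T x)) \<and>
     (\<forall>x y. l2 x \<longrightarrow> l2 y \<longrightarrow> T (\<lambda>i. x i + y i) = (\<lambda>p. T x p + T y p)) \<and>
     (\<forall>c x. l2 x \<longrightarrow> T (\<lambda>i. c * x i) = (\<lambda>p. c * T x p)) \<and>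
     (\<exists>C. \<forall>x. l2 x \<longrightarrow> l2_norm (T x) \<le> C * l2_norm x)"

(* bounded linear operator l2('a)# -> l2('b): on the common carrier it is
   additive and satisfies T(\<lambda> * y) = \<lambda> T y, where \<lambda> * y = cnj \<lambda> y *)
definition bounded_op_conj :: "(('a \<Rightarrow> complex) \<Rightarrow> ('b \<Rightarrow> complex)) \<Rightarrow> bool" where
  "bounded_op_conj T \<longleftrightarrow>
     (\<forall>x. l2 x \<longrightarrow> l2 (T x)) \<and>
     (\<forall>x y. l2 x \<longrightarrow> l2 y \<longrightarrow> T (\<lambda>i. x i + y i) = (\<lambda>p. T x p + T y p)) \<and>
     (\<forall>c x. l2 x \<longrightarrow> T (\<lambda>i. cnj c * x i) = (\<lambda>p. c * T x p)) \<and>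
     (\<exists>C. \<forall>x. l2 x \<longrightarrow> l2_norm (T x) \<le> C * l2_norm x)"

(* Hilbert-Schmidt: sum over an orthonormal basis of ||T e_k||^2 is finite.
   The vectors ket k form an orthonormal basis both of l2('a) and of l2('a)#. *)
definition hs_op :: "(('a \<Rightarrow> complex) \<Rightarrow> ('b \<Rightarrow> complex)) \<Rightarrow> bool" where
  "hs_op T \<longleftrightarrow> bounded_op T \<and> (\<lambda>k. (l2_norm (T (ket k)))^2) summable_on UNIV"

definition hs_op_conj :: "(('a \<Rightarrow> complex) \<Rightarrow> ('b \<Rightarrow> complex)) \<Rightarrow> bool" where
  "hs_op_conj T \<longleftrightarrow> bounded_op_conj T \<and> (\<lambda>k. (l2_norm (T (ket k)))^2) summable_on UNIV"

definition nonzero_op :: "(('a \<Rightarrow> complex) \<Rightarrow> ('b \<Rightarrow> complex)) \<Rightarrow> bool" where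
  "nonzero_op T \<longleftrightarrow> (\<exists>x. l2 x \<and> T x \<noteq> (\<lambda>_. 0))"

(* adjoint of a linear operator T : l2('a) -> l2('b): <T* y, e_k> = <y, T e_k> *)
definition adj :: "(('a \<Rightarrow> complex) \<Rightarrow> ('b \<Rightarrow> complex)) \<Rightarrow> ('b \<Rightarrow> complex) \<Rightarrow> ('a \<Rightarrow> complex)" where
  "adj T y = (\<lambda>k. l2_inner y (T (ket k)))"

(* adjoint of an operator T : l2('a)# -> l2('b), as a map into the carrier of l2('a)#:
   T* y = sum_k cnj <T* y, e_k>_# e_k = sum_k <T e_k, y> e_k *)
definition adj_conj :: "(('a \<Rightarrow> complex) \<Rightarrow> ('b \<Rightarrow> complex)) \<Rightarrow> ('b \<Rightarrow> complex) \<Rightarrow> ('a \<Rightarrow> complex)" where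
  "adj_conj T y = (\<lambda>k. l2_inner (T (ket k)) y)"

(* transposition Q# = C_K Q* C_H^{-1}; conjugation maps are the identity on carriers *)
definition transp :: "(('a \<Rightarrow> complex) \<Rightarrow> ('b \<Rightarrow> complex)) \<Rightarrow> ('b \<Rightarrow> complex) \<Rightarrow> ('a \<Rightarrow> complex)" where
  "transp Q = adj Q"

(* vec : B2(l2('i)#, l2('j)) -> l2('i) \<otimes> l2('j); this is the continuous linear
   extension of vec(theta_{y, cnj x}) = x \<otimes> y *)
definition vec :: "(('i \<Rightarrow> complex) \<Rightarrow> ('j \<Rightarrow> complex)) \<Rightarrow> ('i \<times> 'j \<Rightarrow> complex)" where
  "vec X = (\<lambda>(i, j). X (ket i) j)"

definition theta :: "('b \<Rightarrow> complex) \<Rightarrow> ('a \<Rightarrow> complex) \<Rightarrow> ('a \<Rightarrow> complex) \<Rightarrow> ('b \<Rightarrow> complex)" where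
  "theta x y = (\<lambda>w p. l2_inner w y * x p)"

definition tensor_op ::
  "(('i \<Rightarrow> complex) \<Rightarrow> ('i2 \<Rightarrow> complex)) \<Rightarrow> (('j \<Rightarrow> complex) \<Rightarrow> ('j2 \<Rightarrow> complex))
    \<Rightarrow> ('i \<times> 'j \<Rightarrow> complex) \<Rightarrow> ('i2 \<times> 'j2 \<Rightarrow> complex)" where
  "tensor_op P Q = (\<lambda>w (i, j). infsum (\<lambda>(i', j'). P (ket i') i * Q (ket j') j * w (i', j')) UNIV)"

definition scale_op :: "real \<Rightarrow> (('a \<Rightarrow> complex) \<Rightarrow> ('b \<Rightarrow> complex)) \<Rightarrow> ('a \<Rightarrow> complex) \<Rightarrow> ('b \<Rightarrow> complex)" where
  "scale_op c T = (\<lambda>w p. complex_of_real c * T w p)"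

definition zero_op :: "('a \<Rightarrow> complex) \<Rightarrow> ('b \<Rightarrow> complex)" where
  "zero_op = (\<lambda>w p. 0)"

(* X \<succcurlyeq> Y :  <(X - Y) w, w> \<ge> 0 for all w (complex order: real and nonnegative) *)
definition loewner_ge :: "(('a \<Rightarrow> complex) \<Rightarrow> ('a \<Rightarrow> complex)) \<Rightarrow> (('a \<Rightarrow> complex) \<Rightarrow> ('a \<Rightarrow> complex)) \<Rightarrow> bool" where
  "loewner_ge X Y \<longleftrightarrow> (\<forall>w. l2 w \<longrightarrow> 0 \<le> l2_inner (\<lambda>p. X w p - Y w p) w)"

(* rank = dimension (possibly infinite) of the closure of the range *)
definition l2_closure :: "('i \<Rightarrow> complex) set \<Rightarrow> ('i \<Rightarrow> complex) set" where
  "l2_closure S = {x. l2 x \<and> (\<forall>e>0. \<exists>y\<in>S. l2_norm (\<lambda>i. x i - y i) < e)}"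

definition lin_indep :: "('i \<Rightarrow> complex) set \<Rightarrow> bool" where
  "lin_indep S \<longleftrightarrow> finite S \<and>
     (\<forall>c. (\<lambda>i. \<Sum>s\<in>S. c s * s i) = (\<lambda>i. 0) \<longrightarrow> (\<forall>s\<in>S. c s = 0))"

definition op_rank :: "(('a \<Rightarrow> complex) \<Rightarrow> ('b \<Rightarrow> complex)) \<Rightarrow> enat" where
  "op_rank T = Sup {enat (card S) | S. S \<subseteq> l2_closure {T x | x. l2 x} \<and> lin_indep S}"

definition inv_enat :: "enat \<Rightarrow> real" where
  "inv_enat m = (case m of enat n \<Rightarrow> 1 / real n | \<infinity> \<Rightarrow> 0)"

definition AAs :: "(('k \<Rightarrow> complex) \<Rightarrow> ('i \<Rightarrow> complex)) \<Rightarrow> ('i \<Rightarrow> complex) \<Rightarrow> ('i \<Rightarrow> complex)" where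
  "AAs A = A \<circ> adj A"

definition BBs :: "(('k \<Rightarrow> complex) \<Rightarrow> ('j \<Rightarrow> complex)) \<Rightarrow> ('j \<Rightarrow> complex) \<Rightarrow> ('j \<Rightarrow> complex)" where
  "BBs B = B \<circ> adj_conj B"

definition min_rank :: "(('k \<Rightarrow> complex) \<Rightarrow> ('i \<Rightarrow> complex)) \<Rightarrow> (('k \<Rightarrow> complex) \<Rightarrow> ('j \<Rightarrow> complex)) \<Rightarrow> enat" where
  "min_rank A B = min (op_rank (AAs A)) (op_rank (BBs B))"

end

(* Write a_k = A e_k and b_k = B e_k for the columns of A and B. Then AA^* and BB^* are the
   frame operators of the Hilbert-Schmidt families (a_k) and (b_k), and vec(BA^#) is the
   diagonal tensor \<Sum>_k a_k \<otimes> b_k. For w in H1 \<otimes> H2 let M_kl = <w, a_k \<otimes> b_l>. The quadratic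
   form of AA^* \<otimes> BB^* at w is the squared Hilbert-Schmidt norm \<Sum>|M_kl|^2 of M, while
   <w, vec(BA^#)> is its trace \<Sum>_k M_kk. Every column of M lies in the range of A^* and every
   row in the range of B^*, and these ranges have dimensions rk AA^* and rk BB^*. If all
   columns (or all rows) lie in an n-dimensional space, Cauchy-Schwarz against an orthonormal
   basis of that space gives |tr M|^2 \<le> n \<Sum>|M_kl|^2, which is the inequality.

   For sharpness take diagonal A and B whose singular values are (1/2)^t on an index set of
   the prescribed size, and w = \<Sum>_{t \<in> E} 4^t e_t \<otimes> e_t for a finite E. Then M is the
   indicator of the diagonal over E, so tr M = \<Sum>|M_kl|^2 = |E|, and c |tr M|^2 exceeds
   \<Sum>|M_kl|^2 as soon as c |E| > 1; such an E exists whenever c exceeds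
   the reciprocal of the smaller rank. *)

theory Submission
  imports Defs "HOL-Library.Function_Algebras"
begin

section \<open>Square-summable functions\<close>

definition l2_normsq :: "('a \<Rightarrow> complex) \<Rightarrow> real" where
  "l2_normsq x = infsum (\<lambda>i. (cmod (x i))^2) UNIV"

lemma l2_normsq_nonneg: "0 \<le> l2_normsq x"
  unfolding l2_normsq_def by (rule infsum_nonneg) auto

lemma l2_norm_eq_sqrt_normsq: "l2_norm x = sqrt (l2_normsq x)"
  unfolding l2_norm_def l2_normsq_def ..

lemma l2_has_sum_normsq: "l2 x \<Longrightarrow> ((\<lambda>i. (cmod (x i))^2) has_sum l2_normsq x) UNIV"
  unfolding l2_def l2_normsq_def by (simp add: summable_iff_has_sum_infsum)

lemma l2_coord_sq_le: assumes "l2 x" shows "(cmod (x i))^2 \<le> l2_normsq x"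
  using finite_sum_le_has_sum[OF l2_has_sum_normsq[OF assms], of "{i}"] by auto

lemma l2_coord_le: assumes "l2 x" shows "cmod (x i) \<le> sqrt (l2_normsq x)"
  using l2_coord_sq_le[OF assms, of i] real_le_rsqrt by blast

lemma l2_comparison:
  assumes "l2 x" "\<And>i. cmod (y i) \<le> c * cmod (x i)"
  shows "l2 y"
proof -
  have "(\<lambda>i. c^2 * (cmod (x i))^2) summable_on UNIV"
    using assms(1) unfolding l2_def by (intro summable_on_cmult_right)
  moreover have "(cmod (y i))^2 \<le> c^2 * (cmod (x i))^2" for i
    using power_mono[OF assms(2), where n=2] by (simp add: power_mult_distrib)
  ultimately show ?thesis unfolding l2_def
    by (rule summable_on_comparison_test) auto
qed

lemma l2_zero [simp]: "l2 (\<lambda>_. 0)"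
  unfolding l2_def by simp

lemma l2_scale: "l2 x \<Longrightarrow> l2 (\<lambda>i. c * x i)"
  by (rule l2_comparison[where c="cmod c"]) (auto simp: norm_mult)

lemma l2_cnj: "l2 x \<Longrightarrow> l2 (\<lambda>i. cnj (x i))"
  by (rule l2_comparison[where c=1]) auto

lemma l2_add: assumes "l2 x" "l2 y" shows "l2 (\<lambda>i. x i + y i)"
proof -
  have "(\<lambda>i. 2 * (cmod (x i))^2 + 2 * (cmod (y i))^2) summable_on UNIV"
    using assms unfolding l2_def by (intro summable_on_add summable_on_cmult_right) auto
  moreover have "(cmod (x i + y i))^2 \<le> 2 * (cmod (x i))^2 + 2 * (cmod (y i))^2" for i
  proof -
    have "(cmod (x i + y i))^2 \<le> (cmod (x i) + cmod (y i))^2"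
      by (rule power_mono[OF norm_triangle_ineq]) auto
    also have "\<dots> \<le> 2 * (cmod (x i))^2 + 2 * (cmod (y i))^2"
      using zero_le_power2[of "cmod (x i) - cmod (y i)"] unfolding power2_sum power2_diff by linarith
    finally show ?thesis .
  qed
  ultimately show ?thesis unfolding l2_def
    by (rule summable_on_comparison_test) auto
qed

lemma l2_diff: assumes "l2 x" "l2 y" shows "l2 (\<lambda>i. x i - y i)"
  using l2_add[OF assms(1) l2_scale[OF assms(2), of "-1"]] by simp

lemma l2_sum: "finite F \<Longrightarrow> (\<And>s. s \<in> F \<Longrightarrow> l2 (f s)) \<Longrightarrow> l2 (\<lambda>i. \<Sum>s\<in>F. f s i)"
  by (induction F rule: finite_induct) (auto intro: l2_add)

lemma l2_finite_support:
  assumes "finite S" "\<And>i. i \<notin> S \<Longrightarrow> x i = 0" shows "l2 x"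
proof -
  have "(\<lambda>i. (cmod (x i))^2) summable_on S" using assms(1) by simp
  then show ?thesis unfolding l2_def
    by (rule summable_on_cong_neutral[THEN iffD1, rotated -1]) (auto simp: assms(2))
qed

lemma l2_ket [simp]: "l2 (ket k)"
  by (rule l2_finite_support[of "{k}"]) (auto simp: ket_def)

lemma ket_eq_iff: "ket x = ket y \<longleftrightarrow> x = y"
  by (metis ket_def one_neq_zero)

lemma cnj_ket [simp]: "(\<lambda>k. cnj (ket s k)) = ket s"
  by (auto simp: ket_def)

lemma l2_normsq_finite_support:
  assumes "finite S" "\<And>i. i \<notin> S \<Longrightarrow> x i = 0"
  shows "l2_normsq x = (\<Sum>i\<in>S. (cmod (x i))^2)"
proof -
  have "infsum (\<lambda>i. (cmod (x i))^2) UNIV = infsum (\<lambda>i. (cmod (x i))^2) S"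
    by (rule infsum_cong_neutral) (auto simp: assms(2))
  then show ?thesis using assms(1) unfolding l2_normsq_def by simp
qed

lemma l2_normsq_ket [simp]: "l2_normsq (ket k) = 1"
  by (subst l2_normsq_finite_support[of "{k}"]) (auto simp: ket_def)

lemma l2_normsq_scale: "l2 x \<Longrightarrow> l2_normsq (\<lambda>i. c * x i) = (cmod c)^2 * l2_normsq x"
  unfolding l2_normsq_def l2_def
  by (simp add: norm_mult power_mult_distrib infsum_cmult_right')

lemma l2_normsq_cnj [simp]: "l2_normsq (\<lambda>i. cnj (x i)) = l2_normsq x"
  unfolding l2_normsq_def by simp

lemma l2_normsq_eq_0:
  assumes "l2 x" "l2_normsq x = 0" shows "x = (\<lambda>_. 0)"
proof
  fix i
  have "(cmod (x i))^2 \<le> 0" using l2_coord_sq_le[OF assms(1), of i] assms(2) by simp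
  then show "x i = 0" by simp
qed

lemma l2_cauchy_schwarz:
  assumes "l2 x" "l2 y"
  shows "(\<lambda>i. cmod (x i) * cmod (y i)) summable_on UNIV"
    and "infsum (\<lambda>i. cmod (x i) * cmod (y i)) UNIV \<le> sqrt (l2_normsq x) * sqrt (l2_normsq y)"
proof -
  have bound: "sum (\<lambda>i. cmod (x i) * cmod (y i)) F \<le> sqrt (l2_normsq x) * sqrt (l2_normsq y)"
    if "finite F" for F
  proof -
    have "(sum (\<lambda>i. cmod (x i) * cmod (y i)) F)^2
          \<le> (\<Sum>i\<in>F. (cmod (x i))^2) * (\<Sum>i\<in>F. (cmod (y i))^2)"
      by (rule Cauchy_Schwarz_ineq_sum)
    also have "\<dots> \<le> l2_normsq x * l2_normsq y"
      using finite_sum_le_has_sum[OF l2_has_sum_normsq[OF assms(1)] that]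
            finite_sum_le_has_sum[OF l2_has_sum_normsq[OF assms(2)] that]
      by (intro mult_mono) (auto intro: sum_nonneg simp: l2_normsq_nonneg)
    finally have "(sum (\<lambda>i. cmod (x i) * cmod (y i)) F)^2
                  \<le> (sqrt (l2_normsq x) * sqrt (l2_normsq y))^2"
      by (simp add: power_mult_distrib l2_normsq_nonneg)
    then show ?thesis
      by (rule power2_le_imp_le) (auto simp: l2_normsq_nonneg)
  qed
  show summable: "(\<lambda>i. cmod (x i) * cmod (y i)) summable_on UNIV"
    by (rule nonneg_bdd_above_summable_on) (auto intro!: bdd_aboveI2 bound)
  show "infsum (\<lambda>i. cmod (x i) * cmod (y i)) UNIV \<le> sqrt (l2_normsq x) * sqrt (l2_normsq y)"
    by (rule infsum_le_finite_sums[OF summable]) (auto intro: bound)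
qed

lemma l2_inner_summable:
  assumes "l2 x" "l2 y" shows "(\<lambda>i. x i * cnj (y i)) summable_on UNIV"
proof -
  have "(\<lambda>i. norm (x i * cnj (y i))) summable_on UNIV"
    using l2_cauchy_schwarz(1)[OF assms] by (simp add: norm_mult)
  then show ?thesis by (rule abs_summable_summable)
qed

lemma l2_inner_bound:
  assumes "l2 x" "l2 y" shows "cmod (l2_inner x y) \<le> sqrt (l2_normsq x) * sqrt (l2_normsq y)"
proof -
  have "(\<lambda>i. norm (x i * cnj (y i))) summable_on UNIV"
    using l2_cauchy_schwarz(1)[OF assms] by (simp add: norm_mult)
  then have "cmod (l2_inner x y) \<le> infsum (\<lambda>i. cmod (x i * cnj (y i))) UNIV"
    unfolding l2_inner_def by (rule norm_infsum_bound)
  also have "\<dots> \<le> sqrt (l2_normsq x) * sqrt (l2_normsq y)"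
    using l2_cauchy_schwarz(2)[OF assms] by (simp add: norm_mult)
  finally show ?thesis .
qed

lemma l2_inner_sq_bound:
  assumes "l2 x" "l2 y" shows "(cmod (l2_inner x y))^2 \<le> l2_normsq x * l2_normsq y"
  using power_mono[OF l2_inner_bound[OF assms], where n=2]
  by (simp add: power_mult_distrib l2_normsq_nonneg)

lemma l2_inner_add_left:
  "l2 x \<Longrightarrow> l2 y \<Longrightarrow> l2 z \<Longrightarrow> l2_inner (\<lambda>i. x i + y i) z = l2_inner x z + l2_inner y z"
  unfolding l2_inner_def by (simp add: distrib_right infsum_add l2_inner_summable)

lemma l2_inner_scale_left: "l2_inner (\<lambda>i. c * x i) z = c * l2_inner x z"
  unfolding l2_inner_def by (simp add: mult.assoc infsum_cmult_right')

lemma l2_inner_zero_left [simp]: "l2_inner (\<lambda>_. 0) y = 0"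
  unfolding l2_inner_def by simp

lemma l2_inner_cnj_commute: "l2_inner y x = cnj (l2_inner x y)"
  unfolding l2_inner_def infsum_cnj[symmetric] by (simp add: mult.commute)

lemma l2_inner_sum_left:
  assumes "finite F" "\<And>s. s \<in> F \<Longrightarrow> l2 (f s)" "l2 z"
  shows "l2_inner (\<lambda>i. \<Sum>s\<in>F. \<alpha> s * f s i) z = (\<Sum>s\<in>F. \<alpha> s * l2_inner (f s) z)"
  using assms(1,2)
proof (induction F rule: finite_induct)
  case (insert a F)
  then have "l2_inner (\<lambda>i. \<alpha> a * f a i + (\<Sum>s\<in>F. \<alpha> s * f s i)) z
             = \<alpha> a * l2_inner (f a) z + l2_inner (\<lambda>i. \<Sum>s\<in>F. \<alpha> s * f s i) z"
    by (subst l2_inner_add_left) (auto intro!: l2_scale l2_sum assms(3) simp: l2_inner_scale_left)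
  with insert show ?case by simp
qed simp

lemma l2_inner_sum_right:
  assumes "finite F" "\<And>s. s \<in> F \<Longrightarrow> l2 (f s)" "l2 z"
  shows "l2_inner z (\<lambda>i. \<Sum>s\<in>F. \<alpha> s * f s i) = (\<Sum>s\<in>F. cnj (\<alpha> s) * l2_inner z (f s))"
  using l2_inner_sum_left[OF assms, where \<alpha>=\<alpha>]
  by (simp add: l2_inner_cnj_commute[of z] cnj_sum)

lemma infsum_diff:
  fixes f g :: "'a \<Rightarrow> 'b::real_normed_vector"
  assumes "f summable_on A" "g summable_on A"
  shows "infsum (\<lambda>x. f x - g x) A = infsum f A - infsum g A"
  using infsum_add[OF assms(1) summable_on_uminus[THEN iffD2, OF assms(2)]]
  by (simp add: infsum_uminus)

lemma l2_inner_diff_left: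
  assumes "l2 x" "l2 y" "l2 z"
  shows "l2_inner (\<lambda>i. x i - y i) z = l2_inner x z - l2_inner y z"
  unfolding l2_inner_def by (simp add: left_diff_distrib infsum_diff l2_inner_summable assms)

lemma l2_inner_diff_right:
  assumes "l2 x" "l2 y" "l2 z"
  shows "l2_inner z (\<lambda>i. x i - y i) = l2_inner z x - l2_inner z y"
  using l2_inner_diff_left[OF assms] l2_inner_cnj_commute by (metis complex_cnj_diff)

lemma infsum_of_real:
  "infsum (\<lambda>x. complex_of_real (f x)) A = complex_of_real (infsum f A)"
proof (cases "f summable_on A")
  case True
  then show ?thesis by (intro infsumI has_sum_of_real) (simp add: summable_iff_has_sum_infsum)
next
  case False
  then have "\<not> (\<lambda>x. complex_of_real (f x)) summable_on A"
    using summable_on_Re by fastforce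
  with False show ?thesis by (simp add: infsum_not_exists)
qed

lemma l2_inner_self: "l2_inner x x = complex_of_real (l2_normsq x)"
  unfolding l2_inner_def l2_normsq_def complex_norm_square infsum_of_real[symmetric] ..

lemma l2_inner_ket_left: "l2_inner (ket k) x = cnj (x k)"
proof -
  have "l2_inner (ket k) x = infsum (\<lambda>i. ket k i * cnj (x i)) {k}"
    unfolding l2_inner_def by (rule infsum_cong_neutral) (auto simp: ket_def)
  then show ?thesis by (simp add: ket_def)
qed

lemma l2_inner_ket_right: "l2_inner x (ket k) = x k"
  using l2_inner_ket_left[of k x] l2_inner_cnj_commute[of x "ket k"] by simp

lemma nonneg_product_has_sum:
  fixes f :: "'a \<Rightarrow> real" and g :: "'b \<Rightarrow> real"
  assumes "f summable_on UNIV" "g summable_on UNIV" "\<And>x. f x \<ge> 0" "\<And>y. g y \<ge> 0"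
  shows "((\<lambda>(x, y). f x * g y) has_sum (infsum f UNIV * infsum g UNIV)) UNIV"
proof -
  have row: "((\<lambda>y. f x * g y) has_sum (f x * infsum g UNIV)) UNIV" for x
    using assms(2) by (intro has_sum_cmult_right) (simp add: summable_iff_has_sum_infsum)
  have "(\<lambda>(x, y). f x * g y) summable_on UNIV \<times> UNIV"
    by (rule summable_on_SigmaI[where g="\<lambda>x. f x * infsum g UNIV"])
       (use row summable_on_cmult_left[OF assms(1)] assms(3,4) in auto)
  moreover have "infsum (\<lambda>x. infsum (\<lambda>y. f x * g y) UNIV) UNIV = infsum f UNIV * infsum g UNIV"
    by (simp add: infsum_cmult_right' infsum_cmult_left')
  ultimately show ?thesis
    using infsum_Sigma'_banach[of "\<lambda>x y. f x * g y" UNIV "\<lambda>_. UNIV"]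
    by (simp add: summable_iff_has_sum_infsum)
qed

lemma abs_summable_product_infsum:
  fixes f :: "'a \<Rightarrow> complex" and g :: "'b \<Rightarrow> complex"
  assumes "(\<lambda>x. norm (f x)) summable_on UNIV" "(\<lambda>y. norm (g y)) summable_on UNIV"
  shows "infsum f UNIV * infsum g UNIV = infsum (\<lambda>(x, y). f x * g y) UNIV"
proof -
  have "(\<lambda>(x, y). norm (f x) * norm (g y)) summable_on UNIV"
    using nonneg_product_has_sum[OF assms] by (auto dest: has_sum_imp_summable)
  then have "(\<lambda>p. norm ((\<lambda>(x, y). f x * g y) p)) summable_on UNIV"
    by (simp add: case_prod_beta' norm_mult)
  then have summable: "(\<lambda>(x, y). f x * g y) summable_on UNIV \<times> UNIV"
    by (simp add: abs_summable_summable)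
  have "infsum f UNIV * infsum g UNIV = infsum (\<lambda>x. infsum (\<lambda>y. f x * g y) UNIV) UNIV"
    by (simp add: infsum_cmult_left' infsum_cmult_right')
  also have "\<dots> = infsum (\<lambda>(x, y). f x * g y) UNIV"
    using infsum_Sigma'_banach[OF summable] by simp
  finally show ?thesis .
qed

lemma l2_inner_series_abs_summable:
  fixes \<phi> :: "'m \<Rightarrow> 'p \<Rightarrow> complex" and \<beta> :: "'m \<Rightarrow> complex" and u :: "'p \<Rightarrow> complex"
  assumes \<phi>: "\<And>m. l2 (\<phi> m)" and u: "l2 u"
    and summable: "(\<lambda>m. cmod (\<beta> m) * sqrt (l2_normsq (\<phi> m))) summable_on UNIV"
  shows "(\<lambda>(m, p). norm (u p * cnj (\<beta> m) * cnj (\<phi> m p))) summable_on UNIV \<times> UNIV"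
proof -
  define g where "g = (\<lambda>(m, p). u p * cnj (\<beta> m) * cnj (\<phi> m p))"
  have norm_g: "norm (g (m, p)) = cmod (\<beta> m) * (cmod (u p) * cmod (\<phi> m p))" for m p
    by (simp add: g_def norm_mult)
  have row: "(\<lambda>p. norm (g (m, p))) summable_on UNIV" for m
    unfolding norm_g by (intro summable_on_cmult_right l2_cauchy_schwarz(1) u \<phi>)
  have bound: "infsum (\<lambda>p. norm (g (m, p))) UNIV
               \<le> sqrt (l2_normsq u) * (cmod (\<beta> m) * sqrt (l2_normsq (\<phi> m)))" for m
    unfolding norm_g infsum_cmult_right'
    using mult_left_mono[OF l2_cauchy_schwarz(2)[OF u \<phi>], of "cmod (\<beta> m)"] by (simp add: mult_ac)
  have "(\<lambda>m. infsum (\<lambda>p. norm (g (m, p))) UNIV) summable_on UNIV"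
    by (rule summable_on_comparison_test[OF summable_on_cmult_right[OF summable]])
       (use bound in \<open>auto intro: infsum_nonneg\<close>)
  then have "(\<lambda>x. norm (g x)) summable_on UNIV \<times> UNIV"
    using row by (subst Infinite_Sum.abs_summable_on_Sigma_iff) (simp add: infsum_nonneg)
  then show ?thesis by (simp add: g_def case_prod_unfold)
qed

lemma l2_inner_infsum_right:
  fixes \<phi> :: "'m \<Rightarrow> 'p \<Rightarrow> complex" and \<beta> :: "'m \<Rightarrow> complex" and u :: "'p \<Rightarrow> complex"
  assumes \<phi>: "\<And>m. l2 (\<phi> m)" and u: "l2 u"
    and summable: "(\<lambda>m. cmod (\<beta> m) * sqrt (l2_normsq (\<phi> m))) summable_on UNIV"
  shows "(\<lambda>p. u p * cnj (infsum (\<lambda>m. \<beta> m * \<phi> m p) UNIV)) summable_on UNIV"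
    and "l2_inner u (\<lambda>p. infsum (\<lambda>m. \<beta> m * \<phi> m p) UNIV)
         = infsum (\<lambda>m. cnj (\<beta> m) * l2_inner u (\<phi> m)) UNIV"
proof -
  define g where "g = (\<lambda>(m, p). u p * cnj (\<beta> m) * cnj (\<phi> m p))"
  have "(\<lambda>x. norm (g x)) summable_on UNIV \<times> UNIV"
    using l2_inner_series_abs_summable[OF assms] by (simp add: g_def case_prod_unfold)
  then have g: "g summable_on UNIV \<times> UNIV" by (rule abs_summable_summable)
  have g_row: "infsum (\<lambda>p. g (m, p)) UNIV = cnj (\<beta> m) * l2_inner u (\<phi> m)" for m
    unfolding g_def l2_inner_def by (simp add: infsum_cmult_right'[symmetric] mult_ac)
  have g_col: "infsum (\<lambda>m. g (m, p)) UNIV = u p * cnj (infsum (\<lambda>m. \<beta> m * \<phi> m p) UNIV)" for p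
    unfolding g_def infsum_cnj[symmetric] by (simp add: infsum_cmult_right'[symmetric] mult_ac)
  have "(\<lambda>(p, m). g (m, p)) summable_on UNIV \<times> UNIV"
    using summable_on_swap[of g UNIV UNIV] g by simp
  then show "(\<lambda>p. u p * cnj (infsum (\<lambda>m. \<beta> m * \<phi> m p) UNIV)) summable_on UNIV"
    using summable_on_Sigma_banach[of "\<lambda>p m. g (m, p)" UNIV "\<lambda>_. UNIV"] by (simp add: g_col)
  have "infsum (\<lambda>m. infsum (\<lambda>p. g (m, p)) UNIV) UNIV = infsum (\<lambda>p. infsum (\<lambda>m. g (m, p)) UNIV) UNIV"
    using infsum_swap_banach[of "\<lambda>m p. g (m, p)"] g by simp
  then show "l2_inner u (\<lambda>p. infsum (\<lambda>m. \<beta> m * \<phi> m p) UNIV)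
             = infsum (\<lambda>m. cnj (\<beta> m) * l2_inner u (\<phi> m)) UNIV"
    unfolding g_row g_col l2_inner_def ..
qed

section \<open>Hilbert-Schmidt families and their frame operators\<close>

definition hs_family :: "('k \<Rightarrow> 'i \<Rightarrow> complex) \<Rightarrow> bool" where
  "hs_family c \<longleftrightarrow> (\<forall>k. l2 (c k)) \<and> (\<lambda>k. l2_normsq (c k)) summable_on UNIV"

definition family_normsq :: "('k \<Rightarrow> 'i \<Rightarrow> complex) \<Rightarrow> real" where
  "family_normsq c = infsum (\<lambda>k. l2_normsq (c k)) UNIV"

definition synthesis :: "('k \<Rightarrow> 'i \<Rightarrow> complex) \<Rightarrow> ('k \<Rightarrow> complex) \<Rightarrow> 'i \<Rightarrow> complex" where
  "synthesis c x = (\<lambda>i. infsum (\<lambda>k. x k * c k i) UNIV)"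

definition analysis :: "('k \<Rightarrow> 'i \<Rightarrow> complex) \<Rightarrow> ('i \<Rightarrow> complex) \<Rightarrow> 'k \<Rightarrow> complex" where
  "analysis c y = (\<lambda>k. l2_inner y (c k))"

definition frame_op :: "('k \<Rightarrow> 'i \<Rightarrow> complex) \<Rightarrow> ('i \<Rightarrow> complex) \<Rightarrow> 'i \<Rightarrow> complex" where
  "frame_op c y = synthesis c (analysis c y)"

lemma hs_family_l2: "hs_family c \<Longrightarrow> l2 (c k)"
  unfolding hs_family_def by auto

lemma hs_family_summable: "hs_family c \<Longrightarrow> (\<lambda>k. l2_normsq (c k)) summable_on UNIV"
  unfolding hs_family_def by auto

lemma hs_family_norms_l2:
  "hs_family c \<Longrightarrow> l2 (\<lambda>k. complex_of_real (sqrt (l2_normsq (c k))))"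
  unfolding hs_family_def l2_def by (simp add: l2_normsq_nonneg)

lemma hs_family_coord_l2:
  assumes "hs_family c" shows "l2 (\<lambda>k. c k i)"
  unfolding l2_def
  by (rule summable_on_comparison_test[where f="\<lambda>k. l2_normsq (c k)"])
     (use assms in \<open>auto simp: hs_family_def intro: l2_coord_sq_le\<close>)

lemma hs_family_weighted_summable:
  assumes "hs_family c" "l2 x"
  shows "(\<lambda>k. cmod (x k) * sqrt (l2_normsq (c k))) summable_on UNIV"
  using l2_cauchy_schwarz(1)[OF assms(2) hs_family_norms_l2[OF assms(1)]]
  by (simp add: l2_normsq_nonneg)

lemma hs_family_coord_normsq:
  assumes "hs_family c"
  shows "(\<lambda>i. infsum (\<lambda>k. (cmod (c k i))^2) UNIV) summable_on UNIV"
    and "infsum (\<lambda>i. infsum (\<lambda>k. (cmod (c k i))^2) UNIV) UNIV = family_normsq c"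
proof -
  have "(\<lambda>(k, i). (cmod (c k i))^2) summable_on UNIV \<times> UNIV"
    by (rule summable_on_SigmaI[where g="\<lambda>k. l2_normsq (c k)"])
       (use assms in \<open>auto simp: hs_family_def intro: l2_has_sum_normsq\<close>)
  note summable = this[unfolded UNIV_Times_UNIV]
  have "(\<lambda>(i, k). (cmod (c k i))^2) summable_on UNIV \<times> UNIV"
    using summable_on_swap[of "\<lambda>(k, i). (cmod (c k i))^2" UNIV UNIV] summable by simp
  then show "(\<lambda>i. infsum (\<lambda>k. (cmod (c k i))^2) UNIV) summable_on UNIV"
    using summable_on_Sigma_banach[of "\<lambda>i k. (cmod (c k i))^2" UNIV "\<lambda>_. UNIV"] by simp
  show "infsum (\<lambda>i. infsum (\<lambda>k. (cmod (c k i))^2) UNIV) UNIV = family_normsq c"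
    using infsum_swap_banach[of "\<lambda>k i. (cmod (c k i))^2" UNIV UNIV] summable
    unfolding family_normsq_def l2_normsq_def by simp
qed

lemma synthesis_abs_summable:
  assumes "hs_family c" "l2 x" shows "(\<lambda>k. norm (x k * c k i)) summable_on UNIV"
  using l2_cauchy_schwarz(1)[OF assms(2) hs_family_coord_l2[OF assms(1)]] by (simp add: norm_mult)

lemma synthesis_summable:
  assumes "hs_family c" "l2 x" shows "(\<lambda>k. x k * c k i) summable_on UNIV"
  using synthesis_abs_summable[OF assms] by (rule abs_summable_summable)

lemma synthesis_coord_bound:
  assumes "hs_family c" "l2 x"
  shows "(cmod (synthesis c x i))^2 \<le> l2_normsq x * infsum (\<lambda>k. (cmod (c k i))^2) UNIV"
proof -
  have "cmod (synthesis c x i) \<le> infsum (\<lambda>k. norm (x k * c k i)) UNIV"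
    unfolding synthesis_def by (rule norm_infsum_bound) (rule synthesis_abs_summable[OF assms])
  also have "\<dots> \<le> sqrt (l2_normsq x) * sqrt (l2_normsq (\<lambda>k. c k i))"
    using l2_cauchy_schwarz(2)[OF assms(2) hs_family_coord_l2[OF assms(1)]] by (simp add: norm_mult)
  finally have "(cmod (synthesis c x i))^2 \<le> (sqrt (l2_normsq x) * sqrt (l2_normsq (\<lambda>k. c k i)))^2"
    by (intro power_mono) auto
  also have "\<dots> = l2_normsq x * l2_normsq (\<lambda>k. c k i)"
    by (simp add: power_mult_distrib l2_normsq_nonneg)
  finally show ?thesis by (simp add: l2_normsq_def[of "\<lambda>k. c k i"])
qed

lemma synthesis_l2:
  assumes "hs_family c" "l2 x"
  shows "l2 (synthesis c x)" and "l2_normsq (synthesis c x) \<le> l2_normsq x * family_normsq c"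
proof -
  have summable: "(\<lambda>i. l2_normsq x * infsum (\<lambda>k. (cmod (c k i))^2) UNIV) summable_on UNIV"
    by (intro summable_on_cmult_right hs_family_coord_normsq(1)[OF assms(1)])
  show l2: "l2 (synthesis c x)" unfolding l2_def
    by (rule summable_on_comparison_test[OF summable]) (use synthesis_coord_bound[OF assms] in auto)
  have "l2_normsq (synthesis c x) \<le> infsum (\<lambda>i. l2_normsq x * infsum (\<lambda>k. (cmod (c k i))^2) UNIV) UNIV"
    unfolding l2_normsq_def[of "synthesis c x"]
    by (rule infsum_mono[OF l2[unfolded l2_def] summable]) (use synthesis_coord_bound[OF assms] in auto)
  also have "\<dots> = l2_normsq x * family_normsq c"
    by (simp add: infsum_cmult_right' hs_family_coord_normsq(2)[OF assms(1)])
  finally show "l2_normsq (synthesis c x) \<le> l2_normsq x * family_normsq c" .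
qed

lemma synthesis_add:
  assumes "hs_family c" "l2 x" "l2 y"
  shows "synthesis c (\<lambda>k. x k + y k) = (\<lambda>i. synthesis c x i + synthesis c y i)"
  unfolding synthesis_def
  by (auto simp: distrib_right intro!: infsum_add synthesis_summable assms)

lemma synthesis_scale: "synthesis c (\<lambda>k. a * x k) = (\<lambda>i. a * synthesis c x i)"
  unfolding synthesis_def by (simp add: mult.assoc infsum_cmult_right')

lemma synthesis_diff:
  assumes "hs_family c" "l2 x" "l2 y"
  shows "synthesis c (\<lambda>k. x k - y k) = (\<lambda>i. synthesis c x i - synthesis c y i)"
  using synthesis_add[OF assms(1,2) l2_scale[OF assms(3), of "-1"]] synthesis_scale[of c "-1" y]
  by simp

lemma synthesis_sum:
  assumes "finite F" "\<And>s. s \<in> F \<Longrightarrow> l2 (x s)" "hs_family c"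
  shows "synthesis c (\<lambda>k. \<Sum>s\<in>F. \<alpha> s * x s k) = (\<lambda>i. \<Sum>s\<in>F. \<alpha> s * synthesis c (x s) i)"
  using assms(1,2)
proof (induction F rule: finite_induct)
  case (insert a F)
  then have "synthesis c (\<lambda>k. \<alpha> a * x a k + (\<Sum>s\<in>F. \<alpha> s * x s k))
             = (\<lambda>i. \<alpha> a * synthesis c (x a) i + synthesis c (\<lambda>k. \<Sum>s\<in>F. \<alpha> s * x s k) i)"
    by (subst synthesis_add[OF assms(3)]) (auto intro!: l2_scale l2_sum simp: synthesis_scale)
  with insert show ?case by simp
qed (simp add: synthesis_def)

lemma synthesis_ket: "synthesis c (ket k) = c k"
proof
  fix i
  have "synthesis c (ket k) i = infsum (\<lambda>k'. ket k k' * c k' i) {k}"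
    unfolding synthesis_def by (rule infsum_cong_neutral) (auto simp: ket_def)
  then show "synthesis c (ket k) i = c k i" by (simp add: ket_def)
qed

lemma bounded_op_synthesis:
  assumes "hs_family c" shows "bounded_op (synthesis c)"
  unfolding bounded_op_def
proof (intro conjI allI impI exI)
  fix x :: "'a \<Rightarrow> complex" assume "l2 x"
  show "l2 (synthesis c x)" by (rule synthesis_l2(1)[OF assms \<open>l2 x\<close>])
  have "sqrt (l2_normsq (synthesis c x)) \<le> sqrt (l2_normsq x * family_normsq c)"
    using synthesis_l2(2)[OF assms \<open>l2 x\<close>] by simp
  then show "l2_norm (synthesis c x) \<le> sqrt (family_normsq c) * l2_norm x"
    by (simp add: l2_norm_eq_sqrt_normsq real_sqrt_mult mult.commute)
qed (auto simp: synthesis_add[OF assms] synthesis_scale)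

lemma hs_op_synthesis: "hs_family c \<Longrightarrow> hs_op (synthesis c)"
  unfolding hs_op_def using bounded_op_synthesis
  by (auto simp: synthesis_ket hs_family_def l2_norm_eq_sqrt_normsq l2_normsq_nonneg)

lemma analysis_l2:
  assumes "hs_family c" "l2 y" shows "l2 (analysis c y)"
  unfolding l2_def analysis_def
  by (rule summable_on_comparison_test[OF summable_on_cmult_right[OF hs_family_summable[OF assms(1)]]])
     (use assms in \<open>auto simp: hs_family_def intro: l2_inner_sq_bound\<close>)

lemma l2_inner_analysis:
  assumes "hs_family c" "l2 y" "l2 u"
  shows "l2_inner (analysis c y) u = l2_inner y (synthesis c u)"
proof -
  have "l2_inner y (synthesis c u) = infsum (\<lambda>k. cnj (u k) * l2_inner y (c k)) UNIV"
    unfolding synthesis_def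
    by (rule l2_inner_infsum_right(2))
       (use assms hs_family_weighted_summable[OF assms(1,3)] in \<open>auto simp: hs_family_def\<close>)
  then show ?thesis unfolding l2_inner_def analysis_def by (simp add: mult.commute)
qed

lemma analysis_add:
  assumes "hs_family c" "l2 x" "l2 y"
  shows "analysis c (\<lambda>i. x i + y i) = (\<lambda>k. analysis c x k + analysis c y k)"
  using assms by (auto simp: analysis_def l2_inner_add_left hs_family_l2)

lemma analysis_scale: "analysis c (\<lambda>i. a * x i) = (\<lambda>k. a * analysis c x k)"
  by (simp add: analysis_def l2_inner_scale_left)

lemma frame_op_l2: "hs_family c \<Longrightarrow> l2 y \<Longrightarrow> l2 (frame_op c y)"
  unfolding frame_op_def by (intro synthesis_l2(1) analysis_l2)

lemma frame_op_scale: "frame_op c (\<lambda>i. \<alpha> * y i) = (\<lambda>i. \<alpha> * frame_op c y i)"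
  unfolding frame_op_def analysis_scale synthesis_scale ..

lemma frame_op_ket: "frame_op c (ket i') i = infsum (\<lambda>k. cnj (c k i') * c k i) UNIV"
  unfolding frame_op_def synthesis_def analysis_def by (simp add: l2_inner_ket_left)

section \<open>Operators as synthesis operators of their columns\<close>

lemma bounded_op_l2: "bounded_op T \<Longrightarrow> l2 x \<Longrightarrow> l2 (T x)"
  unfolding bounded_op_def by blast

lemma bounded_op_add:
  "bounded_op T \<Longrightarrow> l2 x \<Longrightarrow> l2 y \<Longrightarrow> T (\<lambda>i. x i + y i) = (\<lambda>p. T x p + T y p)"
  unfolding bounded_op_def by blast

lemma bounded_op_scale: "bounded_op T \<Longrightarrow> l2 x \<Longrightarrow> T (\<lambda>i. c * x i) = (\<lambda>p. c * T x p)"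
  unfolding bounded_op_def by blast

lemma bounded_op_sum:
  assumes "bounded_op T" "finite F" "\<And>s. s \<in> F \<Longrightarrow> l2 (f s)"
  shows "T (\<lambda>i. \<Sum>s\<in>F. \<alpha> s * f s i) = (\<lambda>p. \<Sum>s\<in>F. \<alpha> s * T (f s) p)"
  using assms(2,3)
proof (induction F rule: finite_induct)
  case empty
  show ?case using bounded_op_scale[OF assms(1) l2_zero, of 0] by simp
next
  case (insert a F)
  then have "T (\<lambda>i. \<alpha> a * f a i + (\<Sum>s\<in>F. \<alpha> s * f s i))
             = (\<lambda>p. \<alpha> a * T (f a) p + T (\<lambda>i. \<Sum>s\<in>F. \<alpha> s * f s i) p)"
    by (subst bounded_op_add[OF assms(1)])
       (auto intro!: l2_scale l2_sum simp: bounded_op_scale[OF assms(1)])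
  with insert show ?case by simp
qed

lemma bounded_op_bound:
  assumes "bounded_op T"
  obtains C where "\<And>x. l2 x \<Longrightarrow> sqrt (l2_normsq (T x)) \<le> C * sqrt (l2_normsq x)"
  using assms unfolding bounded_op_def l2_norm_eq_sqrt_normsq by blast

lemma l2_normsq_outside:
  assumes "l2 x" "finite F"
  shows "l2_normsq (\<lambda>k. if k \<in> F then 0 else x k) = l2_normsq x - (\<Sum>k\<in>F. (cmod (x k))^2)"
proof -
  have "((\<lambda>k. (cmod (if k \<in> F then x k else 0))^2) has_sum (\<Sum>k\<in>F. (cmod (x k))^2)) UNIV"
    using has_sum_finite[OF assms(2), of "\<lambda>k. (cmod (x k))^2"]
    by (rule has_sum_cong_neutral[THEN iffD1, rotated -1]) auto
  from has_sum_add[OF l2_has_sum_normsq this, of "\<lambda>k. if k \<in> F then 0 else x k"]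
  have "((\<lambda>k. (cmod (x k))^2) has_sum
          l2_normsq (\<lambda>k. if k \<in> F then 0 else x k) + (\<Sum>k\<in>F. (cmod (x k))^2)) UNIV"
    by (rule has_sum_cong[THEN iffD1, rotated])
       (auto intro: l2_comparison[OF assms(1), where c=1])
  with l2_has_sum_normsq[OF assms(1)] show ?thesis
    using has_sum_unique by fastforce
qed

lemma bounded_op_has_sum_expansion:
  assumes T: "bounded_op T" and x: "l2 x"
  shows "((\<lambda>k. x k * T (ket k) p) has_sum T x p) UNIV"
proof -
  obtain C where C: "\<And>z. l2 z \<Longrightarrow> sqrt (l2_normsq (T z)) \<le> C * sqrt (l2_normsq z)"
    using bounded_op_bound[OF T] by blast
  define tail where "tail F = (\<lambda>k. if k \<in> F then 0 else x k)" for F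
  have tail: "l2 (tail F)" for F
    unfolding tail_def by (rule l2_comparison[OF x, where c=1]) auto
  have split: "T x p = (\<Sum>k\<in>F. x k * T (ket k) p) + T (tail F) p" if "finite F" for F
  proof -
    have "x = (\<lambda>i. (\<Sum>k\<in>F. x k * ket k i) + tail F i)"
      using that by (auto simp: tail_def ket_def fun_eq_iff if_distrib[of "\<lambda>t. _ * t"] cong: if_cong)
    then have "T x = T (\<lambda>i. (\<Sum>k\<in>F. x k * ket k i) + tail F i)" by simp
    also have "\<dots> = (\<lambda>p. T (\<lambda>i. \<Sum>k\<in>F. x k * ket k i) p + T (tail F) p)"
      using that by (intro bounded_op_add[OF T] l2_sum l2_scale tail) auto
    finally show ?thesis
      using that by (simp add: bounded_op_sum[OF T])
  qed
  have "\<forall>\<^sub>F F in finite_subsets_at_top UNIV.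
          norm ((\<Sum>k\<in>F. x k * T (ket k) p) - T x p)
          \<le> C * sqrt (l2_normsq x - (\<Sum>k\<in>F. (cmod (x k))^2))"
  proof (rule eventually_finite_subsets_at_top_weakI)
    fix F :: "'a set" assume F: "finite F"
    have "norm ((\<Sum>k\<in>F. x k * T (ket k) p) - T x p) = cmod (T (tail F) p)"
      using split[OF F] by (simp add: norm_minus_commute)
    also have "\<dots> \<le> C * sqrt (l2_normsq (tail F))"
      using l2_coord_le[OF bounded_op_l2[OF T tail]] C[OF tail] by (rule order_trans)
    finally show "norm ((\<Sum>k\<in>F. x k * T (ket k) p) - T x p)
                  \<le> C * sqrt (l2_normsq x - (\<Sum>k\<in>F. (cmod (x k))^2))"
      using l2_normsq_outside[OF x F] by (simp add: tail_def)
  qed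
  moreover have "((\<lambda>F. C * sqrt (l2_normsq x - (\<Sum>k\<in>F. (cmod (x k))^2)))
                   \<longlongrightarrow> C * sqrt (l2_normsq x - l2_normsq x)) (finite_subsets_at_top UNIV)"
    using l2_has_sum_normsq[OF x] unfolding has_sum_def by (intro tendsto_intros)
  ultimately have "((\<lambda>F. (\<Sum>k\<in>F. x k * T (ket k) p) - T x p) \<longlongrightarrow> 0) (finite_subsets_at_top UNIV)"
    by (auto intro: Lim_null_comparison)
  then show ?thesis unfolding has_sum_def by (rule LIM_zero_cancel)
qed

lemma bounded_op_eq_synthesis:
  assumes "bounded_op T" "l2 x" shows "T x = synthesis (\<lambda>k. T (ket k)) x"
  unfolding synthesis_def using bounded_op_has_sum_expansion[OF assms]
  by (auto intro: infsumI[symmetric])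

lemma bounded_op_conj_cnj:
  assumes "bounded_op_conj T" shows "bounded_op (\<lambda>x. T (\<lambda>k. cnj (x k)))"
  unfolding bounded_op_def
proof (intro conjI allI impI)
  fix x y :: "'a \<Rightarrow> complex" and c assume x: "l2 x"
  show "l2 (T (\<lambda>k. cnj (x k)))"
    using assms l2_cnj[OF x] unfolding bounded_op_conj_def by blast
  show "T (\<lambda>k. cnj (c * x k)) = (\<lambda>p. c * T (\<lambda>k. cnj (x k)) p)"
    using assms l2_cnj[OF x] unfolding bounded_op_conj_def by simp
  assume y: "l2 y"
  show "T (\<lambda>k. cnj (x k + y k)) = (\<lambda>p. T (\<lambda>k. cnj (x k)) p + T (\<lambda>k. cnj (y k)) p)"
    using assms l2_cnj[OF x] l2_cnj[OF y] unfolding bounded_op_conj_def by simp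
next
  obtain C where C: "\<And>x. l2 x \<Longrightarrow> l2_norm (T x) \<le> C * l2_norm x"
    using assms unfolding bounded_op_conj_def by blast
  have "l2_norm (T (\<lambda>k. cnj (x k))) \<le> C * l2_norm x" if "l2 x" for x
    using C[OF l2_cnj[OF that]] by (simp add: l2_norm_def)
  then show "\<exists>C. \<forall>x. l2 x \<longrightarrow> l2_norm (T (\<lambda>k. cnj (x k))) \<le> C * l2_norm x"
    by blast
qed

lemma bounded_op_conj_eq_synthesis:
  assumes "bounded_op_conj T" "l2 x"
  shows "T x = synthesis (\<lambda>k. T (ket k)) (\<lambda>k. cnj (x k))"
  using bounded_op_eq_synthesis[OF bounded_op_conj_cnj[OF assms(1)] l2_cnj[OF assms(2)]] by simp

lemma hs_op_columns: "hs_op A \<Longrightarrow> hs_family (\<lambda>k. A (ket k))"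
  unfolding hs_op_def hs_family_def bounded_op_def l2_norm_eq_sqrt_normsq
  by (auto simp: l2_normsq_nonneg)

lemma hs_op_conj_columns: "hs_op_conj B \<Longrightarrow> hs_family (\<lambda>k. B (ket k))"
  unfolding hs_op_conj_def hs_family_def bounded_op_conj_def l2_norm_eq_sqrt_normsq
  by (auto simp: l2_normsq_nonneg)

lemma AAs_eq_frame_op:
  assumes "hs_op A" "l2 y" shows "AAs A y = frame_op (\<lambda>k. A (ket k)) y"
proof -
  have "adj A y = analysis (\<lambda>k. A (ket k)) y"
    unfolding adj_def analysis_def ..
  moreover have "l2 (analysis (\<lambda>k. A (ket k)) y)"
    by (rule analysis_l2[OF hs_op_columns[OF assms(1)] assms(2)])
  ultimately show ?thesis
    using bounded_op_eq_synthesis assms(1) unfolding AAs_def frame_op_def hs_op_def by auto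
qed

lemma BBs_eq_frame_op:
  assumes "hs_op_conj B" "l2 y" shows "BBs B y = frame_op (\<lambda>k. B (ket k)) y"
proof -
  have adj: "adj_conj B y = (\<lambda>k. cnj (analysis (\<lambda>k. B (ket k)) y k))"
    unfolding adj_conj_def analysis_def by (simp add: l2_inner_cnj_commute[of y])
  have "l2 (adj_conj B y)"
    unfolding adj by (intro l2_cnj analysis_l2 hs_op_conj_columns assms)
  then have "B (adj_conj B y) = synthesis (\<lambda>k. B (ket k)) (\<lambda>k. cnj (adj_conj B y k))"
    using bounded_op_conj_eq_synthesis assms(1) unfolding hs_op_conj_def by blast
  then show ?thesis unfolding BBs_def frame_op_def comp_def adj by simp
qed

lemma tensor_op_AAs_BBs:
  assumes "hs_op A" "hs_op_conj B"
  shows "tensor_op (AAs A) (BBs B) = tensor_op (frame_op (\<lambda>k. A (ket k))) (frame_op (\<lambda>k. B (ket k)))"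
  unfolding tensor_op_def AAs_eq_frame_op[OF assms(1) l2_ket] BBs_eq_frame_op[OF assms(2) l2_ket] ..

lemma vec_comp_transp:
  assumes "hs_op A" "hs_op_conj B"
  shows "vec (B \<circ> transp A) = (\<lambda>(i, j). infsum (\<lambda>k. A (ket k) i * B (ket k) j) UNIV)"
proof -
  have adj: "adj A (ket i) = (\<lambda>k. cnj (A (ket k) i))" for i
    unfolding adj_def by (simp add: l2_inner_ket_left)
  have "l2 (adj A (ket i))" for i
    using analysis_l2[OF hs_op_columns[OF assms(1)], of "ket i"] unfolding adj_def analysis_def by simp
  then have "B (adj A (ket i)) = synthesis (\<lambda>k. B (ket k)) (\<lambda>k. cnj (adj A (ket i) k))" for i
    using bounded_op_conj_eq_synthesis assms(2) unfolding hs_op_conj_def by blast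
  then show ?thesis unfolding vec_def transp_def synthesis_def by (simp add: adj)
qed

lemma op_rank_cong:
  assumes "\<And>y. l2 y \<Longrightarrow> T y = S y" shows "op_rank T = op_rank S"
proof -
  have "{T x |x. l2 x} = {S x |x. l2 x}" using assms by force
  then show ?thesis unfolding op_rank_def by simp
qed

lemma min_rank_eq_frame_op_ranks:
  assumes "hs_op A" "hs_op_conj B"
  shows "min_rank A B = min (op_rank (frame_op (\<lambda>k. A (ket k)))) (op_rank (frame_op (\<lambda>k. B (ket k))))"
  unfolding min_rank_def
  using op_rank_cong[of "AAs A", OF AAs_eq_frame_op[OF assms(1)]]
    op_rank_cong[of "BBs B", OF BBs_eq_frame_op[OF assms(2)]]
  by simp

lemma synthesis_zero_family: "synthesis (\<lambda>_ _. 0) x = (\<lambda>_. 0)"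
  by (simp add: synthesis_def)

lemma hs_op_nonzero_column:
  assumes "hs_op A" "nonzero_op A" shows "\<exists>k. A (ket k) \<noteq> (\<lambda>_. 0)"
proof (rule ccontr)
  obtain x where x: "l2 x" "A x \<noteq> (\<lambda>_. 0)" using assms(2) unfolding nonzero_op_def by blast
  assume "\<not> ?thesis"
  then have "(\<lambda>k. A (ket k)) = (\<lambda>_ _. 0)" by auto
  then have "A x = (\<lambda>_. 0)"
    using bounded_op_eq_synthesis[OF _ x(1), of A] assms(1) by (simp add: hs_op_def synthesis_zero_family)
  with x(2) show False ..
qed

lemma hs_op_conj_nonzero_column:
  assumes "hs_op_conj B" "nonzero_op B" shows "\<exists>k. B (ket k) \<noteq> (\<lambda>_. 0)"
proof (rule ccontr)
  obtain x where x: "l2 x" "B x \<noteq> (\<lambda>_. 0)" using assms(2) unfolding nonzero_op_def by blast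
  assume "\<not> ?thesis"
  then have "(\<lambda>k. B (ket k)) = (\<lambda>_ _. 0)" by auto
  then have "B x = (\<lambda>_. 0)"
    using bounded_op_conj_eq_synthesis[OF _ x(1), of B] assms(1)
    by (simp add: hs_op_conj_def synthesis_zero_family)
  with x(2) show False ..
qed

section \<open>The coefficient matrix of a tensor\<close>

definition tensor_family ::
    "('k \<Rightarrow> 'i \<Rightarrow> complex) \<Rightarrow> ('l \<Rightarrow> 'j \<Rightarrow> complex) \<Rightarrow> 'k \<times> 'l \<Rightarrow> 'i \<times> 'j \<Rightarrow> complex" where
  "tensor_family a b = (\<lambda>(k, l) (i, j). a k i * b l j)"

definition coeff_matrix ::
    "('k \<Rightarrow> 'i \<Rightarrow> complex) \<Rightarrow> ('l \<Rightarrow> 'j \<Rightarrow> complex) \<Rightarrow> ('i \<times> 'j \<Rightarrow> complex) \<Rightarrow> 'k \<times> 'l \<Rightarrow> complex" where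
  "coeff_matrix a b w = (\<lambda>kl. l2_inner w (tensor_family a b kl))"

definition tensor_diag ::
    "('k \<Rightarrow> 'i \<Rightarrow> complex) \<Rightarrow> ('k \<Rightarrow> 'j \<Rightarrow> complex) \<Rightarrow> 'i \<times> 'j \<Rightarrow> complex" where
  "tensor_diag a b = (\<lambda>(i, j). infsum (\<lambda>k. a k i * b k j) UNIV)"

lemma vec_comp_transp_eq_tensor_diag:
  "hs_op A \<Longrightarrow> hs_op_conj B \<Longrightarrow> vec (B \<circ> transp A) = tensor_diag (\<lambda>k. A (ket k)) (\<lambda>k. B (ket k))"
  unfolding vec_comp_transp tensor_diag_def ..

context
  fixes a :: "'k \<Rightarrow> 'i \<Rightarrow> complex" and b :: "'l \<Rightarrow> 'j \<Rightarrow> complex"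
  assumes a: "hs_family a" and b: "hs_family b"
begin

lemma tensor_family_has_sum_normsq:
  "((\<lambda>p. (cmod (tensor_family a b (k, l) p))^2) has_sum (l2_normsq (a k) * l2_normsq (b l))) UNIV"
proof -
  have "(\<lambda>p. (cmod (tensor_family a b (k, l) p))^2) = (\<lambda>(i, j). (cmod (a k i))^2 * (cmod (b l j))^2)"
    by (auto simp: tensor_family_def norm_mult power_mult_distrib)
  then show ?thesis
    using nonneg_product_has_sum[of "\<lambda>i. (cmod (a k i))^2" "\<lambda>j. (cmod (b l j))^2"]
      hs_family_l2[OF a, of k] hs_family_l2[OF b, of l]
    by (simp add: l2_def l2_normsq_def)
qed

lemma l2_tensor_family: "l2 (tensor_family a b kl)"
  using tensor_family_has_sum_normsq[of "fst kl" "snd kl"] unfolding l2_def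
  by (auto dest: has_sum_imp_summable)

lemma l2_normsq_tensor_family:
  "l2_normsq (tensor_family a b kl) = l2_normsq (a (fst kl)) * l2_normsq (b (snd kl))"
  using tensor_family_has_sum_normsq[of "fst kl" "snd kl"] unfolding l2_normsq_def by (simp add: infsumI)

lemma norms_product_summable:
  "(\<lambda>(k, l). l2_normsq (a k) * l2_normsq (b l)) summable_on UNIV"
  using nonneg_product_has_sum[OF hs_family_summable[OF a] hs_family_summable[OF b]]
  by (auto dest: has_sum_imp_summable simp: l2_normsq_nonneg)

lemma coeff_matrix_bound:
  assumes "l2 w"
  shows "cmod (coeff_matrix a b w (k, l))
         \<le> sqrt (l2_normsq w) * (sqrt (l2_normsq (a k)) * sqrt (l2_normsq (b l)))"
  using l2_inner_bound[OF assms l2_tensor_family, of "(k, l)"]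
  by (simp add: coeff_matrix_def l2_normsq_tensor_family real_sqrt_mult)

lemma l2_coeff_matrix:
  assumes w: "l2 w" shows "l2 (coeff_matrix a b w)"
  unfolding l2_def
proof (rule summable_on_comparison_test)
  show "(\<lambda>(k, l). l2_normsq w * (l2_normsq (a k) * l2_normsq (b l))) summable_on UNIV"
    using summable_on_cmult_right[OF norms_product_summable] by (simp add: case_prod_beta')
  fix kl :: "'k \<times> 'l"
  show "(cmod (coeff_matrix a b w kl))^2
        \<le> (case kl of (k, l) \<Rightarrow> l2_normsq w * (l2_normsq (a k) * l2_normsq (b l)))"
    using power_mono[OF coeff_matrix_bound[OF w], where n=2]
    by (cases kl) (simp add: power_mult_distrib l2_normsq_nonneg)
qed auto

lemma coeff_matrix_weighted_summable:
  assumes w: "l2 w"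
  shows "(\<lambda>kl. cmod (coeff_matrix a b w kl) * sqrt (l2_normsq (tensor_family a b kl))) summable_on UNIV"
proof (rule summable_on_comparison_test)
  show "(\<lambda>(k, l). sqrt (l2_normsq w) * (l2_normsq (a k) * l2_normsq (b l))) summable_on UNIV"
    using summable_on_cmult_right[OF norms_product_summable] by (simp add: case_prod_beta')
  fix kl :: "'k \<times> 'l"
  obtain k l where kl: "kl = (k, l)" by (cases kl)
  have "cmod (coeff_matrix a b w kl) * sqrt (l2_normsq (tensor_family a b kl))
        \<le> sqrt (l2_normsq w) * (sqrt (l2_normsq (a k)) * sqrt (l2_normsq (b l)))
          * (sqrt (l2_normsq (a k)) * sqrt (l2_normsq (b l)))"
    unfolding kl l2_normsq_tensor_family real_sqrt_mult fst_conv snd_conv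
    by (rule mult_right_mono[OF coeff_matrix_bound[OF w]]) (auto simp: l2_normsq_nonneg)
  then show "cmod (coeff_matrix a b w kl) * sqrt (l2_normsq (tensor_family a b kl))
             \<le> (case kl of (k, l) \<Rightarrow> sqrt (l2_normsq w) * (l2_normsq (a k) * l2_normsq (b l)))"
    by (simp add: kl l2_normsq_nonneg mult_ac)
qed (auto intro: mult_nonneg_nonneg simp: l2_normsq_nonneg)

lemma frame_op_ket_mult:
  "frame_op a (ket i') i * frame_op b (ket j') j
   = cnj (infsum (\<lambda>kl. cnj (tensor_family a b kl (i, j)) * tensor_family a b kl (i', j')) UNIV)"
proof -
  have "(\<lambda>k. norm (cnj (a k i') * a k i)) summable_on UNIV"
    using l2_cauchy_schwarz(1)[OF hs_family_coord_l2[OF a, of i'] hs_family_coord_l2[OF a, of i]]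
    by (simp add: norm_mult)
  moreover have "(\<lambda>l. norm (cnj (b l j') * b l j)) summable_on UNIV"
    using l2_cauchy_schwarz(1)[OF hs_family_coord_l2[OF b, of j'] hs_family_coord_l2[OF b, of j]]
    by (simp add: norm_mult)
  ultimately have "frame_op a (ket i') i * frame_op b (ket j') j
        = infsum (\<lambda>(k, l). cnj (a k i') * a k i * (cnj (b l j') * b l j)) UNIV"
    unfolding frame_op_ket by (rule abs_summable_product_infsum)
  also have "\<dots> = infsum (\<lambda>kl. cnj (cnj (tensor_family a b kl (i, j)) * tensor_family a b kl (i', j'))) UNIV"
    by (rule infsum_cong) (auto simp: tensor_family_def mult_ac)
  finally show ?thesis by (simp only: infsum_cnj)
qed

lemma tensor_family_weighted_summable:
  "(\<lambda>kl. cmod (tensor_family a b kl p) * sqrt (l2_normsq (tensor_family a b kl))) summable_on UNIV"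
proof -
  obtain i j where p: "p = (i, j)" by (cases p)
  have "(\<lambda>(k, l). (cmod (a k i) * sqrt (l2_normsq (a k))) * (cmod (b l j) * sqrt (l2_normsq (b l))))
        summable_on UNIV"
    using nonneg_product_has_sum[OF hs_family_weighted_summable[OF a hs_family_coord_l2[OF a]]
                                    hs_family_weighted_summable[OF b hs_family_coord_l2[OF b]]]
    by (auto dest: has_sum_imp_summable simp: l2_normsq_nonneg)
  moreover have "cmod (tensor_family a b kl (i, j)) = cmod (a (fst kl) i) * cmod (b (snd kl) j)" for kl
    by (simp add: tensor_family_def case_prod_beta norm_mult)
  ultimately show ?thesis
    by (simp add: p case_prod_beta' l2_normsq_tensor_family real_sqrt_mult mult_ac)
qed

lemma tensor_op_frame_op_expansion:
  assumes w: "l2 w"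
  shows "tensor_op (frame_op a) (frame_op b) w
         = (\<lambda>p. infsum (\<lambda>kl. coeff_matrix a b w kl * tensor_family a b kl p) UNIV)"
proof
  fix p :: "'i \<times> 'j" obtain i j where p: "p = (i, j)" by (cases p)
  have "tensor_op (frame_op a) (frame_op b) w p
        = l2_inner w (\<lambda>q. infsum (\<lambda>kl. cnj (tensor_family a b kl p) * tensor_family a b kl q) UNIV)"
    unfolding tensor_op_def l2_inner_def p by (simp add: frame_op_ket_mult case_prod_beta' mult.commute)
  also have "\<dots> = infsum (\<lambda>kl. cnj (cnj (tensor_family a b kl p)) * l2_inner w (tensor_family a b kl)) UNIV"
    using tensor_family_weighted_summable[of p]
    by (intro l2_inner_infsum_right(2)[OF l2_tensor_family w]) simp
  finally show "tensor_op (frame_op a) (frame_op b) w p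
                = infsum (\<lambda>kl. coeff_matrix a b w kl * tensor_family a b kl p) UNIV"
    by (simp add: coeff_matrix_def mult.commute)
qed

lemma l2_inner_tensor_frame_op:
  assumes w: "l2 w"
  shows "(\<lambda>p. tensor_op (frame_op a) (frame_op b) w p * cnj (w p)) summable_on UNIV"
    and "l2_inner (tensor_op (frame_op a) (frame_op b) w) w
         = complex_of_real (l2_normsq (coeff_matrix a b w))"
proof -
  note series = l2_inner_infsum_right[OF l2_tensor_family w coeff_matrix_weighted_summable[OF w]]
  show "(\<lambda>p. tensor_op (frame_op a) (frame_op b) w p * cnj (w p)) summable_on UNIV"
    using series(1) summable_on_cnj_iff
    by (fastforce simp: tensor_op_frame_op_expansion[OF w] mult.commute)
  have "l2_inner w (tensor_op (frame_op a) (frame_op b) w)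
        = infsum (\<lambda>kl. cnj (coeff_matrix a b w kl) * coeff_matrix a b w kl) UNIV"
    unfolding tensor_op_frame_op_expansion[OF w] series(2) by (simp add: coeff_matrix_def)
  also have "\<dots> = complex_of_real (l2_normsq (coeff_matrix a b w))"
    unfolding l2_normsq_def infsum_of_real[symmetric]
    by (intro infsum_cong) (metis complex_norm_square mult.commute)
  finally show "l2_inner (tensor_op (frame_op a) (frame_op b) w) w
                = complex_of_real (l2_normsq (coeff_matrix a b w))"
    by (subst l2_inner_cnj_commute) simp
qed

end

lemma l2_inner_tensor_diag:
  assumes a: "hs_family a" and b: "hs_family b" and w: "l2 w"
  shows "(\<lambda>p. w p * cnj (tensor_diag a b p)) summable_on UNIV"
    and "l2_inner w (tensor_diag a b) = infsum (\<lambda>k. coeff_matrix a b w (k, k)) UNIV"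
proof -
  have "(\<lambda>k. cmod 1 * sqrt (l2_normsq (tensor_family a b (k, k)))) summable_on UNIV"
  proof (rule summable_on_comparison_test)
    show "(\<lambda>k. l2_normsq (a k) + l2_normsq (b k)) summable_on UNIV"
      by (intro summable_on_add hs_family_summable a b)
    show "cmod 1 * sqrt (l2_normsq (tensor_family a b (k, k)))
          \<le> l2_normsq (a k) + l2_normsq (b k)" for k
      using arith_geo_mean_sqrt[OF l2_normsq_nonneg l2_normsq_nonneg, of "a k" "b k"]
        l2_normsq_nonneg[of "a k"] l2_normsq_nonneg[of "b k"]
      by (simp add: l2_normsq_tensor_family[OF a b])
  qed (auto simp: l2_normsq_nonneg)
  note series = l2_inner_infsum_right[OF l2_tensor_family[OF a b] w this]
  have diag: "tensor_diag a b = (\<lambda>p. infsum (\<lambda>k. 1 * tensor_family a b (k, k) p) UNIV)"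
    by (auto simp: tensor_diag_def tensor_family_def)
  show "(\<lambda>p. w p * cnj (tensor_diag a b p)) summable_on UNIV"
    unfolding diag by (rule series(1))
  show "l2_inner w (tensor_diag a b) = infsum (\<lambda>k. coeff_matrix a b w (k, k)) UNIV"
    unfolding diag series(2) coeff_matrix_def by simp
qed

section \<open>Finite-dimensional subspaces\<close>

interpretation fun_vs: vector_space "\<lambda>(c::complex) (f::'a \<Rightarrow> complex) i. c * f i"
  by unfold_locales (auto simp: fun_eq_iff plus_fun_def algebra_simps)

lemma sum_fun_apply: "(\<Sum>v\<in>t. f v) x = (\<Sum>v\<in>t. f v x)" for f :: "'b \<Rightarrow> 'a \<Rightarrow> complex"
  by (induction t rule: infinite_finite_induct) (auto simp: plus_fun_def zero_fun_def)

lemma lin_indep_independent: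
  assumes "lin_indep (S :: ('a \<Rightarrow> complex) set)" shows "fun_vs.independent S"
proof
  assume "fun_vs.dependent S"
  then obtain t u where t: "finite t" "t \<subseteq> S" "(\<Sum>v\<in>t. (\<lambda>i. u v * v i)) = 0" "\<exists>v\<in>t. u v \<noteq> 0"
    unfolding fun_vs.dependent_explicit by blast
  define c where "c v = (if v \<in> t then u v else 0)" for v
  have "finite S" using assms unfolding lin_indep_def by blast
  then have "(\<lambda>i. \<Sum>s\<in>S. c s * s i) = (\<lambda>i. \<Sum>s\<in>t. u s * s i)"
    using t(2) by (auto simp: c_def fun_eq_iff intro!: sum.mono_neutral_cong_right)
  also have "\<dots> = (\<lambda>i. 0)"
    using fun_cong[OF t(3)] by (auto simp: sum_fun_apply zero_fun_def)
  finally have "\<forall>s\<in>S. c s = 0" using assms unfolding lin_indep_def by blast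
  moreover obtain v where "v \<in> t" "u v \<noteq> 0" using t(4) by blast
  ultimately show False using t(2) by (force simp: c_def)
qed

lemma lin_indep_card_le_span:
  fixes S :: "('a \<Rightarrow> complex) set"
  assumes "lin_indep S" "finite T" "S \<subseteq> fun_vs.span T" shows "card S \<le> card T"
  using fun_vs.independent_span_bound[OF assms(2) lin_indep_independent[OF assms(1)] assms(3)]
  by blast

lemma finite_support_in_span_ket:
  assumes "finite E" "\<And>i. i \<notin> E \<Longrightarrow> x i = 0" shows "x \<in> fun_vs.span (ket ` E)"
proof -
  have "x = (\<Sum>e\<in>E. (\<lambda>i. x e * ket e i))"
    using assms by (auto simp: fun_eq_iff sum_fun_apply ket_def if_distrib[of "\<lambda>t. _ * t"] cong: if_cong)
  also have "\<dots> \<in> fun_vs.span (ket ` E)"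
    by (intro fun_vs.span_sum fun_vs.span_scale fun_vs.span_base) auto
  finally show ?thesis .
qed

lemma lin_indep_card_le_support:
  assumes "lin_indep S" "finite E" "\<And>x i. x \<in> S \<Longrightarrow> i \<notin> E \<Longrightarrow> x i = 0"
  shows "card S \<le> card E"
proof -
  have "card S \<le> card (ket ` E)"
    using assms finite_support_in_span_ket[OF assms(2)] by (intro lin_indep_card_le_span) auto
  also have "\<dots> \<le> card E" using assms(2) by (rule card_image_le)
  finally show ?thesis .
qed

definition l2_subspace :: "('a \<Rightarrow> complex) set \<Rightarrow> bool" where
  "l2_subspace V \<longleftrightarrow> (\<forall>x\<in>V. l2 x) \<and> (\<lambda>_. 0) \<in> V \<and> (\<forall>x\<in>V. \<forall>y\<in>V. (\<lambda>i. x i + y i) \<in> V)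
     \<and> (\<forall>c. \<forall>x\<in>V. (\<lambda>i. c * x i) \<in> V)"

definition dim_at_most :: "('a \<Rightarrow> complex) set \<Rightarrow> nat \<Rightarrow> bool" where
  "dim_at_most V n \<longleftrightarrow> (\<forall>S. S \<subseteq> V \<longrightarrow> lin_indep S \<longrightarrow> card S \<le> n)"

definition l2_orthonormal :: "('a \<Rightarrow> complex) set \<Rightarrow> bool" where
  "l2_orthonormal Q \<longleftrightarrow>
     (\<forall>q\<in>Q. l2 q) \<and> (\<forall>q\<in>Q. \<forall>q'\<in>Q. l2_inner q q' = (if q = q' then 1 else 0))"

definition l2_proj :: "('a \<Rightarrow> complex) set \<Rightarrow> ('a \<Rightarrow> complex) \<Rightarrow> 'a \<Rightarrow> complex" where
  "l2_proj Q u = (\<lambda>i. \<Sum>q\<in>Q. l2_inner u q * q i)"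

lemma l2_subspace_linear_range:
  assumes "\<And>x. l2 x \<Longrightarrow> l2 (T x)"
    and "\<And>x y. l2 x \<Longrightarrow> l2 y \<Longrightarrow> T (\<lambda>i. x i + y i) = (\<lambda>p. T x p + T y p)"
    and "\<And>c x. l2 x \<Longrightarrow> T (\<lambda>i. c * x i) = (\<lambda>p. c * T x p)"
  shows "l2_subspace {T x |x. l2 x}"
  unfolding l2_subspace_def
proof (intro conjI ballI allI)
  have "T (\<lambda>_. 0) = (\<lambda>_. 0)"
    using assms(3)[OF l2_zero, of 0] by simp
  then show "(\<lambda>_. 0) \<in> {T x |x. l2 x}"
    by (intro CollectI exI[of _ "\<lambda>_. 0"]) simp
next
  fix u v assume "u \<in> {T x |x. l2 x}" "v \<in> {T x |x. l2 x}"
  then obtain x y where "l2 x" "l2 y" "u = T x" "v = T y" by blast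
  then show "(\<lambda>p. u p + v p) \<in> {T x |x. l2 x}"
    using assms(2) by (intro CollectI exI[of _ "\<lambda>i. x i + y i"]) (auto intro: l2_add)
next
  fix c u assume "u \<in> {T x |x. l2 x}"
  then obtain x where "l2 x" "u = T x" by blast
  then show "(\<lambda>p. c * u p) \<in> {T x |x. l2 x}"
    using assms(3) by (intro CollectI exI[of _ "\<lambda>i. c * x i"]) (auto intro: l2_scale)
qed (use assms(1) in blast)

lemma l2_subspace_l2: "l2_subspace V \<Longrightarrow> x \<in> V \<Longrightarrow> l2 x"
  unfolding l2_subspace_def by blast

lemma l2_subspace_scale: "l2_subspace V \<Longrightarrow> x \<in> V \<Longrightarrow> (\<lambda>i. c * x i) \<in> V"
  unfolding l2_subspace_def by blast

lemma l2_subspace_sum: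
  assumes "l2_subspace V" "finite F" "\<And>s. s \<in> F \<Longrightarrow> f s \<in> V"
  shows "(\<lambda>i. \<Sum>s\<in>F. \<alpha> s * f s i) \<in> V"
  using assms(2,3)
proof (induction F rule: finite_induct)
  case (insert a F)
  then have "(\<lambda>i. \<alpha> a * f a i + (\<Sum>s\<in>F. \<alpha> s * f s i)) \<in> V"
    using assms(1) unfolding l2_subspace_def by auto
  with insert show ?case by simp
qed (use assms(1) in \<open>simp add: l2_subspace_def\<close>)

lemma l2_subspace_add: "l2_subspace V \<Longrightarrow> x \<in> V \<Longrightarrow> y \<in> V \<Longrightarrow> (\<lambda>i. x i + y i) \<in> V"
  unfolding l2_subspace_def by blast

lemma l2_subspace_diff:
  assumes "l2_subspace V" "x \<in> V" "y \<in> V" shows "(\<lambda>i. x i - y i) \<in> V"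
  using l2_subspace_add[OF assms(1,2) l2_subspace_scale[OF assms(1,3), of "-1"]] by simp

lemma l2_orthonormal_l2: "l2_orthonormal Q \<Longrightarrow> q \<in> Q \<Longrightarrow> l2 q"
  unfolding l2_orthonormal_def by blast

lemma l2_orthonormal_normsq: "l2_orthonormal Q \<Longrightarrow> q \<in> Q \<Longrightarrow> l2_normsq q = 1"
  unfolding l2_orthonormal_def using l2_inner_self[of q] by auto

lemma l2_proj_l2: "l2_orthonormal Q \<Longrightarrow> finite Q \<Longrightarrow> l2 (l2_proj Q u)"
  unfolding l2_proj_def by (intro l2_sum l2_scale l2_orthonormal_l2)

lemma l2_proj_in_subspace:
  "l2_subspace V \<Longrightarrow> finite Q \<Longrightarrow> Q \<subseteq> V \<Longrightarrow> l2_proj Q u \<in> V"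
  unfolding l2_proj_def by (intro l2_subspace_sum) auto

lemma l2_inner_sum_orthonormal:
  assumes "l2_orthonormal Q" "finite Q" "q' \<in> Q"
  shows "l2_inner (\<lambda>i. \<Sum>q\<in>Q. c q * q i) q' = c q'"
proof -
  have "l2_inner (\<lambda>i. \<Sum>q\<in>Q. c q * q i) q' = (\<Sum>q\<in>Q. c q * l2_inner q q')"
    using assms by (intro l2_inner_sum_left) (auto intro: l2_orthonormal_l2)
  also have "\<dots> = (\<Sum>q\<in>Q. if q = q' then c q else 0)"
    using assms(1,3) unfolding l2_orthonormal_def by (intro sum.cong) auto
  finally show ?thesis using assms(2,3) by simp
qed

lemma l2_orthonormal_lin_indep:
  assumes "l2_orthonormal Q" "finite Q" shows "lin_indep Q"
  unfolding lin_indep_def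
proof (intro conjI allI impI ballI)
  fix c q assume "(\<lambda>i. \<Sum>s\<in>Q. c s * s i) = (\<lambda>i. 0)" and "q \<in> Q"
  then show "c q = 0"
    using l2_inner_sum_orthonormal[OF assms \<open>q \<in> Q\<close>, of c] by (simp add: l2_inner_def)
qed (rule assms(2))

lemma l2_inner_residual_proj:
  assumes "l2_orthonormal Q" "finite Q" "l2 x" "q' \<in> Q"
  shows "l2_inner (\<lambda>i. x i - l2_proj Q x i) q' = 0"
  using l2_inner_diff_left[OF assms(3) l2_proj_l2[OF assms(1,2)] l2_orthonormal_l2[OF assms(1,4)]]
    l2_inner_sum_orthonormal[OF assms(1,2,4), of "\<lambda>q. l2_inner x q"]
  by (simp add: l2_proj_def)

lemma l2_orthonormal_insert:
  assumes Q: "l2_orthonormal Q" and r: "l2 r" "r \<noteq> (\<lambda>_. 0)" and orth: "\<And>q. q \<in> Q \<Longrightarrow> l2_inner r q = 0"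
  defines "q0 \<equiv> (\<lambda>i. complex_of_real (1 / sqrt (l2_normsq r)) * r i)"
  shows "l2_orthonormal (insert q0 Q)" and "q0 \<notin> Q"
proof -
  have "l2_normsq r \<noteq> 0" using l2_normsq_eq_0[OF r(1)] r(2) by blast
  then have q00: "l2_inner q0 q0 = 1"
    unfolding l2_inner_self q0_def l2_normsq_scale[OF r(1)]
    using l2_normsq_nonneg[of r] by (simp add: norm_divide power_divide)
  have q0q: "l2_inner q0 q = 0" if "q \<in> Q" for q
    unfolding q0_def l2_inner_scale_left using orth[OF that] by simp
  have qq0: "l2_inner q q0 = 0" if "q \<in> Q" for q
    using q0q[OF that] l2_inner_cnj_commute[of q q0] by simp
  show "q0 \<notin> Q" using q0q q00 by force
  moreover have "l2 q0" unfolding q0_def by (rule l2_scale[OF r(1)])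
  ultimately show "l2_orthonormal (insert q0 Q)"
    using Q q00 q0q qq0 unfolding l2_orthonormal_def by auto
qed

lemma l2_subspace_orthonormal_basis:
  assumes V: "l2_subspace V" and dim: "dim_at_most V n"
  obtains Q where "Q \<subseteq> V" "finite Q" "l2_orthonormal Q" "card Q \<le> n"
    "\<And>u. u \<in> V \<Longrightarrow> l2_proj Q u = u"
proof -
  define K where "K = {card Q | Q. Q \<subseteq> V \<and> finite Q \<and> l2_orthonormal Q}"
  have K_witness: "\<exists>Q. Q \<subseteq> V \<and> finite Q \<and> l2_orthonormal Q \<and> card Q = k" if "k \<in> K" for k
    using that unfolding K_def by blast
  have K_bound: "k \<le> n" if "k \<in> K" for k
    using K_witness[OF that] dim l2_orthonormal_lin_indep unfolding dim_at_most_def by blast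
  have "0 \<in> K" unfolding K_def l2_orthonormal_def by (intro CollectI exI[of _ "{}"]) auto
  have "finite K" unfolding finite_nat_set_iff_bounded_le using K_bound by blast
  then have "Max K \<in> K" using \<open>0 \<in> K\<close> by (intro Max_in) auto
  then obtain Q where Q: "Q \<subseteq> V" "finite Q" "l2_orthonormal Q" "card Q = Max K"
    using K_witness by blast
  have expand: "l2_proj Q u = u" if u: "u \<in> V" for u
  proof (rule ccontr)
    assume ne: "l2_proj Q u \<noteq> u"
    define r where "r = (\<lambda>i. u i - l2_proj Q u i)"
    have rV: "r \<in> V" unfolding r_def by (intro l2_subspace_diff l2_proj_in_subspace V u Q)
    have r_nonzero: "r \<noteq> (\<lambda>_. 0)" using ne unfolding r_def by (metis (full_types) eq_iff_diff_eq_0 ext)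
    have r_orth: "l2_inner r q = 0" if "q \<in> Q" for q
      unfolding r_def by (rule l2_inner_residual_proj[OF Q(3,2) l2_subspace_l2[OF V u] that])
    note insert = l2_orthonormal_insert[OF Q(3) l2_subspace_l2[OF V rV] r_nonzero r_orth]
    define q0 where "q0 = (\<lambda>i. complex_of_real (1 / sqrt (l2_normsq r)) * r i)"
    have "q0 \<in> V" unfolding q0_def by (rule l2_subspace_scale[OF V rV])
    have "q0 \<notin> Q" "l2_orthonormal (insert q0 Q)"
      using insert unfolding q0_def by simp_all
    then have "card (insert q0 Q) \<in> K"
      unfolding K_def using Q(1,2) \<open>q0 \<in> V\<close> by (intro CollectI exI[of _ "insert q0 Q"]) simp
    then have "card (insert q0 Q) \<le> Max K" using \<open>finite K\<close> by simp
    with \<open>q0 \<notin> Q\<close> Q(2,4) show False by simp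
  qed
  show ?thesis
    by (rule that[OF Q(1-3) _ expand]) (use K_bound[OF \<open>Max K \<in> K\<close>] Q(4) in simp)
qed

lemma l2_parseval:
  assumes "l2_orthonormal Q" "finite Q" "l2 u" "l2_proj Q u = u"
  shows "l2_normsq u = (\<Sum>q\<in>Q. (cmod (l2_inner u q))^2)"
proof -
  have "complex_of_real (l2_normsq u) = l2_inner (l2_proj Q u) u"
    by (simp add: l2_inner_self assms(4))
  also have "\<dots> = (\<Sum>q\<in>Q. l2_inner u q * l2_inner q u)"
    unfolding l2_proj_def using assms by (intro l2_inner_sum_left) (auto intro: l2_orthonormal_l2)
  also have "\<dots> = (\<Sum>q\<in>Q. complex_of_real ((cmod (l2_inner u q))^2))"
    by (intro sum.cong refl) (metis complex_norm_square l2_inner_cnj_commute)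
  also have "\<dots> = complex_of_real (\<Sum>q\<in>Q. (cmod (l2_inner u q))^2)"
    by simp
  finally show ?thesis by (simp only: of_real_eq_iff)
qed

lemma l2_closure_orthogonal_residual:
  assumes x: "x \<in> l2_closure V" and V: "\<And>y. y \<in> V \<Longrightarrow> l2 y" and p: "p \<in> V"
    and orth: "\<And>y. y \<in> V \<Longrightarrow> l2_inner (\<lambda>i. x i - p i) y = 0"
  shows "x = p"
proof -
  define d where "d = (\<lambda>i. x i - p i)"
  have lx: "l2 x" using x unfolding l2_closure_def by blast
  have ld: "l2 d" unfolding d_def by (intro l2_diff lx V p)
  have d_x: "complex_of_real (l2_normsq d) = l2_inner d x"
    using l2_inner_diff_right[OF lx V[OF p] ld] orth[OF p] by (simp add: d_def l2_inner_self)
  have "l2_normsq d = 0"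
  proof (rule ccontr)
    assume "l2_normsq d \<noteq> 0"
    then have pos: "l2_normsq d > 0" using l2_normsq_nonneg[of d] by simp
    then obtain y where y: "y \<in> V" "l2_norm (\<lambda>i. x i - y i) < sqrt (l2_normsq d)"
      using x real_sqrt_gt_zero[OF pos] unfolding l2_closure_def by blast
    have "l2_inner d x = l2_inner d (\<lambda>i. x i - y i)"
      using l2_inner_diff_right[OF lx V[OF y(1)] ld] orth[OF y(1)] by (simp add: d_def)
    have "l2_normsq d = cmod (complex_of_real (l2_normsq d))"
      by (simp add: l2_normsq_nonneg)
    also have "\<dots> = cmod (l2_inner d (\<lambda>i. x i - y i))"
      using d_x \<open>l2_inner d x = l2_inner d (\<lambda>i. x i - y i)\<close> by simp
    also have "\<dots> \<le> sqrt (l2_normsq d) * sqrt (l2_normsq (\<lambda>i. x i - y i))"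
      by (rule l2_inner_bound[OF ld l2_diff[OF lx V[OF y(1)]]])
    also have "\<dots> < sqrt (l2_normsq d) * sqrt (l2_normsq d)"
      using y(2) pos by (intro mult_strict_left_mono) (auto simp: l2_norm_eq_sqrt_normsq)
    finally show False using pos by simp
  qed
  then have "d = (\<lambda>_. 0)" by (rule l2_normsq_eq_0[OF ld])
  then have "x i - p i = 0" for i
    unfolding d_def by (simp add: fun_eq_iff)
  then show ?thesis by (simp add: fun_eq_iff)
qed

lemma l2_closure_finite_dim_subspace:
  assumes V: "l2_subspace V" and dim: "dim_at_most V n"
  shows "l2_closure V \<subseteq> V"
proof
  fix x assume x: "x \<in> l2_closure V"
  obtain Q where Q: "Q \<subseteq> V" "finite Q" "l2_orthonormal Q" "card Q \<le> n"
    and expand: "\<And>u. u \<in> V \<Longrightarrow> l2_proj Q u = u"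
    using l2_subspace_orthonormal_basis[OF V dim] by metis
  have lx: "l2 x" using x unfolding l2_closure_def by blast
  have pV: "l2_proj Q x \<in> V" by (rule l2_proj_in_subspace[OF V Q(2,1)])
  have "l2_inner (\<lambda>i. x i - l2_proj Q x i) y = 0" if y: "y \<in> V" for y
  proof -
    have "l2_inner (\<lambda>i. x i - l2_proj Q x i) y = l2_inner (\<lambda>i. x i - l2_proj Q x i) (l2_proj Q y)"
      using expand[OF y] by simp
    also have "\<dots> = (\<Sum>q\<in>Q. cnj (l2_inner y q) * l2_inner (\<lambda>i. x i - l2_proj Q x i) q)"
      unfolding l2_proj_def[of Q y]
      by (intro l2_inner_sum_right Q(2) l2_orthonormal_l2[OF Q(3)] l2_diff lx l2_proj_l2[OF Q(3,2)])
    also have "\<dots> = 0"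
      using l2_inner_residual_proj[OF Q(3,2) lx] by simp
    finally show ?thesis .
  qed
  then have "l2_proj Q x = x"
    using l2_closure_orthogonal_residual[OF x l2_subspace_l2[OF V] pV] by metis
  with pV show "x \<in> V" by simp
qed

lemma infsum_finite_sum:
  fixes f :: "'q \<Rightarrow> 'a \<Rightarrow> 'b::real_normed_vector"
  assumes "finite Q" "\<And>q. q \<in> Q \<Longrightarrow> f q summable_on A"
  shows "infsum (\<lambda>x. \<Sum>q\<in>Q. f q x) A = (\<Sum>q\<in>Q. infsum (f q) A)"
proof -
  have "((\<lambda>x. \<Sum>q\<in>Q. f q x) has_sum (\<Sum>q\<in>Q. infsum (f q) A)) A"
    using assms
    by (induction Q rule: finite_induct) (auto intro: has_sum_add simp: summable_iff_has_sum_infsum)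
  then show ?thesis by (rule infsumI)
qed

text \<open>Expanding every column in an orthonormal basis \<open>Q\<close> of \<open>U\<close> splits the trace into
  \<open>|Q| \<le> n\<close> inner products; Cauchy-Schwarz is applied once to each of them and once to their sum.\<close>

lemma trace_sq_le_dim_mult_normsq:
  fixes z :: "'k \<Rightarrow> 'k \<Rightarrow> complex"
  assumes U: "l2_subspace U" "dim_at_most U n" and z: "\<And>l. z l \<in> U"
    and summable: "(\<lambda>l. l2_normsq (z l)) summable_on UNIV"
  shows "(cmod (infsum (\<lambda>l. z l l) UNIV))^2 \<le> real n * infsum (\<lambda>l. l2_normsq (z l)) UNIV"
proof -
  obtain Q where Q: "Q \<subseteq> U" "finite Q" "l2_orthonormal Q" "card Q \<le> n"
    and expand: "\<And>u. u \<in> U \<Longrightarrow> l2_proj Q u = u"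
    using l2_subspace_orthonormal_basis[OF U] by metis
  have lq: "\<And>q. q \<in> Q \<Longrightarrow> l2 q" using Q(3) by (rule l2_orthonormal_l2)
  have lz: "l2 (z l)" for l using U(1) z by (rule l2_subspace_l2)
  define coeff where "coeff q = (\<lambda>l. l2_inner (z l) q)" for q
  have l2_coeff: "l2 (coeff q)" if q: "q \<in> Q" for q
    unfolding l2_def coeff_def
    by (rule summable_on_comparison_test[OF summable])
       (use l2_inner_sq_bound[OF lz lq[OF q]] l2_orthonormal_normsq[OF Q(3) q] in auto)
  have trace: "infsum (\<lambda>l. z l l) UNIV = (\<Sum>q\<in>Q. l2_inner (coeff q) (\<lambda>l. cnj (q l)))"
  proof -
    have "z l l = (\<Sum>q\<in>Q. coeff q l * q l)" for l
      using fun_cong[OF expand[OF z[of l]], of l] by (simp add: l2_proj_def coeff_def)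
    then show ?thesis
      unfolding l2_inner_def
      by (simp add: infsum_finite_sum[OF Q(2)] l2_inner_summable[OF l2_coeff l2_cnj[OF lq], simplified])
  qed
  have "(cmod (infsum (\<lambda>l. z l l) UNIV))^2 \<le> (\<Sum>q\<in>Q. cmod (l2_inner (coeff q) (\<lambda>l. cnj (q l))) * 1)^2"
    unfolding trace using norm_sum by (intro power_mono) auto
  also have "\<dots> \<le> (\<Sum>q\<in>Q. (cmod (l2_inner (coeff q) (\<lambda>l. cnj (q l))))^2) * (\<Sum>q\<in>Q. 1^2)"
    by (rule Cauchy_Schwarz_ineq_sum)
  also have "\<dots> \<le> (\<Sum>q\<in>Q. l2_normsq (coeff q)) * real (card Q)"
    using l2_inner_sq_bound[OF l2_coeff l2_cnj[OF lq]] l2_orthonormal_normsq[OF Q(3)]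
    by (simp add: mult_right_mono sum_mono)
  also have "(\<Sum>q\<in>Q. l2_normsq (coeff q)) = infsum (\<lambda>l. \<Sum>q\<in>Q. (cmod (coeff q l))^2) UNIV"
    unfolding l2_normsq_def using l2_coeff by (subst infsum_finite_sum[OF Q(2)]) (auto simp: l2_def)
  also have "\<dots> = infsum (\<lambda>l. l2_normsq (z l)) UNIV"
    unfolding coeff_def using l2_parseval[OF Q(3,2) lz expand[OF z]] by simp
  also have "\<dots> * real (card Q) \<le> real n * infsum (\<lambda>l. l2_normsq (z l)) UNIV"
    using Q(4) by (simp add: mult.commute mult_right_mono infsum_nonneg l2_normsq_nonneg)
  finally show ?thesis .
qed

section \<open>The Loewner inequality\<close>

lemma has_sum_swap_UNIV: "((\<lambda>p. f (prod.swap p)) has_sum S) UNIV \<longleftrightarrow> (f has_sum S) UNIV"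
  using has_sum_swap[where f=f and S=S and A=UNIV and B=UNIV] by (simp add: case_prod_unfold prod.swap_def)

lemma infsum_swap_UNIV: "infsum (\<lambda>p. f (prod.swap p)) UNIV = infsum f UNIV"
  using has_sum_swap_UNIV[of f]
  by (metis infsumI infsum_not_exists summable_iff_has_sum_infsum)

lemma l2_swap: "l2 w \<Longrightarrow> l2 (\<lambda>p. w (prod.swap p))"
  unfolding l2_def summable_on_def using has_sum_swap_UNIV[of "\<lambda>p. (cmod (w p))^2"] by simp

lemma l2_row: assumes "l2 w" shows "l2 (\<lambda>j. w (i, j))"
  using assms summable_on_SigmaD1[of "\<lambda>i j. (cmod (w (i, j)))^2" UNIV "\<lambda>_. UNIV" i]
  unfolding l2_def by (simp add: case_prod_beta')

lemma l2_rows_has_sum_normsq: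
  assumes "l2 w" shows "((\<lambda>i. l2_normsq (\<lambda>j. w (i, j))) has_sum l2_normsq w) UNIV"
proof -
  have summable: "(\<lambda>(i, j). (cmod (w (i, j)))^2) summable_on UNIV \<times> UNIV"
    using assms unfolding l2_def by (simp add: case_prod_beta')
  then have "(\<lambda>i. l2_normsq (\<lambda>j. w (i, j))) summable_on UNIV"
    unfolding l2_normsq_def by (rule summable_on_Sigma_banach)
  moreover have "infsum (\<lambda>i. l2_normsq (\<lambda>j. w (i, j))) UNIV = l2_normsq w"
    using infsum_Sigma'_banach[OF summable] unfolding l2_normsq_def by (simp add: case_prod_beta')
  ultimately show ?thesis by (simp add: summable_iff_has_sum_infsum)
qed

lemma l2_cols_has_sum_normsq:
  assumes "l2 w" shows "((\<lambda>j. l2_normsq (\<lambda>i. w (i, j))) has_sum l2_normsq w) UNIV"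
  using l2_rows_has_sum_normsq[OF l2_swap[OF assms]]
  by (simp add: l2_normsq_def infsum_swap_UNIV[of "\<lambda>p. (cmod (w p))^2"])

definition analysis_range :: "('k \<Rightarrow> 'i \<Rightarrow> complex) \<Rightarrow> ('k \<Rightarrow> complex) set" where
  "analysis_range c = {analysis c y | y. l2 y}"

lemma l2_subspace_analysis_range: "hs_family c \<Longrightarrow> l2_subspace (analysis_range c)"
  unfolding analysis_range_def
  by (rule l2_subspace_linear_range) (auto simp: analysis_l2 analysis_add analysis_scale)

text \<open>For \<open>u = analysis c y\<close> one has \<open>\<parallel>u\<parallel>\<^sup>2 = \<langle>y, synthesis c u\<rangle>\<close>.\<close>

lemma synthesis_eq_0_on_analysis_range:
  assumes c: "hs_family c" and u: "u \<in> analysis_range c" and z: "synthesis c u = (\<lambda>_. 0)"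
  shows "u = (\<lambda>_. 0)"
proof -
  obtain y where y: "l2 y" "u = analysis c y" using u unfolding analysis_range_def by blast
  have lu: "l2 u" using analysis_l2[OF c y(1)] y(2) by simp
  have "complex_of_real (l2_normsq u) = l2_inner y (synthesis c u)"
    using l2_inner_analysis[OF c y(1) lu] y(2) by (simp add: l2_inner_self)
  then show ?thesis using z l2_normsq_eq_0[OF lu] by (simp add: l2_inner_def)
qed

lemma op_rank_ge_card:
  assumes "S \<subseteq> {T x |x. l2 x}" "\<And>s. s \<in> S \<Longrightarrow> l2 s" "lin_indep S"
  shows "enat (card S) \<le> op_rank T"
  unfolding op_rank_def
proof (rule Sup_upper, intro CollectI exI conjI)
  show "S \<subseteq> l2_closure {T x |x. l2 x}"
  proof
    fix s assume s: "s \<in> S"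
    have "s \<in> {T x |x. l2 x}" using assms(1) s by blast
    moreover have "l2_norm (\<lambda>i. s i - s i) = 0" by (simp add: l2_norm_def)
    ultimately have "\<exists>y\<in>{T x |x. l2 x}. l2_norm (\<lambda>i. s i - y i) < e" if "e > 0" for e :: real
      using that by (intro bexI[of _ s]) auto
    then show "s \<in> l2_closure {T x |x. l2 x}"
      using assms(2)[OF s] unfolding l2_closure_def by blast
  qed
qed (use assms in auto)

lemma analysis_range_dim_at_most_rank:
  assumes c: "hs_family c" and rank: "op_rank (frame_op c) = enat n"
  shows "dim_at_most (analysis_range c) n"
  unfolding dim_at_most_def
proof (intro allI impI)
  fix S assume S: "S \<subseteq> analysis_range c" and indep: "lin_indep S"
  note V = l2_subspace_analysis_range[OF c]
  have "finite S" using indep unfolding lin_indep_def by blast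
  have lS: "\<And>s. s \<in> S \<Longrightarrow> l2 s" using S V by (auto intro: l2_subspace_l2)
  have synthesis_eq_0: "u = (\<lambda>_. 0)" if "u \<in> analysis_range c" "synthesis c u = (\<lambda>_. 0)" for u
    using synthesis_eq_0_on_analysis_range[OF c that] .
  have inj: "inj_on (synthesis c) S"
  proof
    fix s1 s2 assume s: "s1 \<in> S" "s2 \<in> S" "synthesis c s1 = synthesis c s2"
    have "(\<lambda>k. s1 k - s2 k) = (\<lambda>_. 0)"
      using synthesis_diff[OF c lS[OF s(1)] lS[OF s(2)]] s S
      by (intro synthesis_eq_0 l2_subspace_diff[OF V]) auto
    then show "s1 = s2" by (auto simp: fun_eq_iff)
  qed
  have "lin_indep (synthesis c ` S)"
    unfolding lin_indep_def
  proof (intro conjI allI impI ballI)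
    fix d s' assume h: "(\<lambda>i. \<Sum>s\<in>synthesis c ` S. d s * s i) = (\<lambda>i. 0)" and "s' \<in> synthesis c ` S"
    have "synthesis c (\<lambda>k. \<Sum>s\<in>S. d (synthesis c s) * s k) = (\<lambda>_. 0)"
      using h by (simp add: synthesis_sum[OF \<open>finite S\<close> lS c] sum.reindex[OF inj])
    then have "(\<lambda>k. \<Sum>s\<in>S. d (synthesis c s) * s k) = (\<lambda>_. 0)"
      using S by (intro synthesis_eq_0 l2_subspace_sum[OF V \<open>finite S\<close>]) auto
    then have "\<forall>s\<in>S. d (synthesis c s) = 0"
      using indep[unfolded lin_indep_def, THEN conjunct2, rule_format, of "\<lambda>s. d (synthesis c s)"]
      by simp
    with \<open>s' \<in> synthesis c ` S\<close> show "d s' = 0" by auto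
  qed (use \<open>finite S\<close> in simp)
  moreover have "synthesis c ` S \<subseteq> {frame_op c x |x. l2 x}"
    using S unfolding analysis_range_def frame_op_def by blast
  ultimately have "enat (card (synthesis c ` S)) \<le> op_rank (frame_op c)"
    using synthesis_l2(1)[OF c lS] by (intro op_rank_ge_card) auto
  then show "card S \<le> n" using rank card_image[OF inj] by simp
qed

context
  fixes a :: "'k \<Rightarrow> 'i \<Rightarrow> complex" and b :: "'l \<Rightarrow> 'j \<Rightarrow> complex"
  assumes a: "hs_family a" and b: "hs_family b"
begin

lemma coeff_matrix_col_in_analysis_range:
  assumes w: "l2 w" shows "(\<lambda>k. coeff_matrix a b w (k, l)) \<in> analysis_range a"
proof -
  define y where "y = (\<lambda>i. l2_inner (\<lambda>j. w (i, j)) (b l))"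
  have "l2 y"
    unfolding l2_def y_def
  proof (rule summable_on_comparison_test)
    show "(\<lambda>i. l2_normsq (\<lambda>j. w (i, j)) * l2_normsq (b l)) summable_on UNIV"
      using l2_rows_has_sum_normsq[OF w] by (intro summable_on_cmult_left) (rule has_sum_imp_summable)
    show "(cmod (l2_inner (\<lambda>j. w (i, j)) (b l)))^2 \<le> l2_normsq (\<lambda>j. w (i, j)) * l2_normsq (b l)" for i
      by (rule l2_inner_sq_bound[OF l2_row[OF w] hs_family_l2[OF b]])
  qed auto
  moreover have "coeff_matrix a b w (k, l) = analysis a y k" for k
  proof -
    have summable: "(\<lambda>(i, j). w (i, j) * (cnj (b l j) * cnj (a k i))) summable_on UNIV \<times> UNIV"
      using l2_inner_summable[OF w l2_tensor_family[OF a b, of "(k, l)"]]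
      by (simp add: tensor_family_def case_prod_beta' mult_ac)
    have "coeff_matrix a b w (k, l) = infsum (\<lambda>(i, j). w (i, j) * (cnj (b l j) * cnj (a k i))) UNIV"
      unfolding coeff_matrix_def l2_inner_def tensor_family_def by (simp add: case_prod_beta' mult_ac)
    also have "\<dots> = infsum (\<lambda>i. infsum (\<lambda>j. w (i, j) * (cnj (b l j) * cnj (a k i))) UNIV) UNIV"
      using infsum_Sigma'_banach[OF summable] by simp
    also have "\<dots> = analysis a y k"
      unfolding y_def analysis_def l2_inner_def by (simp add: infsum_cmult_right' mult_ac)
    finally show ?thesis .
  qed
  ultimately show ?thesis unfolding analysis_range_def by blast
qed

lemma coeff_matrix_swap:
  "coeff_matrix b a (\<lambda>p. w (prod.swap p)) (l, k) = coeff_matrix a b w (k, l)"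
  unfolding coeff_matrix_def l2_inner_def
  using infsum_swap_UNIV[of "\<lambda>p. w p * cnj (tensor_family a b (k, l) p)"]
  by (simp add: tensor_family_def case_prod_unfold prod.swap_def mult.commute)

end

lemma coeff_matrix_row_in_analysis_range:
  assumes "hs_family a" "hs_family b" "l2 w"
  shows "(\<lambda>l. coeff_matrix a b w (k, l)) \<in> analysis_range b"
  using coeff_matrix_col_in_analysis_range[OF assms(2,1) l2_swap[OF assms(3)], of k]
  by (simp add: coeff_matrix_swap[OF assms(1,2)])

lemma trace_coeff_matrix_bound:
  assumes a: "hs_family a" and b: "hs_family b" and w: "l2 w"
    and dim: "dim_at_most (analysis_range a) n \<or> dim_at_most (analysis_range b) n"
  shows "(cmod (infsum (\<lambda>k. coeff_matrix a b w (k, k)) UNIV))^2 \<le> real n * l2_normsq (coeff_matrix a b w)"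
  using dim
proof
  assume "dim_at_most (analysis_range a) n"
  then show ?thesis
    using trace_sq_le_dim_mult_normsq[OF l2_subspace_analysis_range[OF a],
        of n "\<lambda>l k. coeff_matrix a b w (k, l)"]
      coeff_matrix_col_in_analysis_range[OF a b w] l2_cols_has_sum_normsq[OF l2_coeff_matrix[OF a b w]]
    by (simp add: has_sum_iff)
next
  assume "dim_at_most (analysis_range b) n"
  then show ?thesis
    using trace_sq_le_dim_mult_normsq[OF l2_subspace_analysis_range[OF b],
        of n "\<lambda>k l. coeff_matrix a b w (k, l)"]
      coeff_matrix_row_in_analysis_range[OF a b w] l2_rows_has_sum_normsq[OF l2_coeff_matrix[OF a b w]]
    by (simp add: has_sum_iff)
qed

lemma l2_inner_diff_left_summable:
  assumes "(\<lambda>p. x p * cnj (z p)) summable_on UNIV" "(\<lambda>p. y p * cnj (z p)) summable_on UNIV"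
  shows "l2_inner (\<lambda>p. x p - y p) z = l2_inner x z - l2_inner y z"
  unfolding l2_inner_def using infsum_diff[OF assms] by (simp add: left_diff_distrib)

lemma l2_inner_scale_op_theta:
  assumes "(\<lambda>p. w p * cnj (v p)) summable_on UNIV"
  shows "(\<lambda>p. scale_op r (theta v v) w p * cnj (w p)) summable_on UNIV"
    and "l2_inner (scale_op r (theta v v) w) w = complex_of_real (r * (cmod (l2_inner w v))^2)"
proof -
  have form: "(\<lambda>p. scale_op r (theta v v) w p * cnj (w p))
              = (\<lambda>p. (complex_of_real r * l2_inner w v) * cnj (w p * cnj (v p)))"
    unfolding scale_op_def theta_def by (simp add: mult_ac)
  show "(\<lambda>p. scale_op r (theta v v) w p * cnj (w p)) summable_on UNIV"
    unfolding form by (rule summable_on_cmult_right) (simp only: summable_on_cnj_iff assms)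
  have "l2_inner (scale_op r (theta v v) w) w = complex_of_real r * (l2_inner w v * cnj (l2_inner w v))"
    unfolding l2_inner_def[of "scale_op r (theta v v) w"] form infsum_cmult_right' infsum_cnj
    by (simp add: l2_inner_def)
  then show "l2_inner (scale_op r (theta v v) w) w = complex_of_real (r * (cmod (l2_inner w v))^2)"
    by (simp only: of_real_mult complex_norm_square)
qed

lemma inv_enat_nonneg: "0 \<le> inv_enat m"
  unfolding inv_enat_def by (cases m) auto

lemma inv_min_rank_trace_bound:
  assumes a: "hs_family a" and b: "hs_family b" and w: "l2 w"
  shows "inv_enat (min (op_rank (frame_op a)) (op_rank (frame_op b)))
           * (cmod (infsum (\<lambda>k. coeff_matrix a b w (k, k)) UNIV))^2
         \<le> l2_normsq (coeff_matrix a b w)"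
proof (cases "min (op_rank (frame_op a)) (op_rank (frame_op b))")
  case (enat n)
  then have "op_rank (frame_op a) = enat n \<or> op_rank (frame_op b) = enat n"
    by (metis min_def)
  then have "(cmod (infsum (\<lambda>k. coeff_matrix a b w (k, k)) UNIV))^2
             \<le> real n * l2_normsq (coeff_matrix a b w)"
    using analysis_range_dim_at_most_rank[OF a] analysis_range_dim_at_most_rank[OF b]
    by (intro trace_coeff_matrix_bound[OF a b w]) blast
  with enat show ?thesis
    by (cases "n = 0") (auto simp: inv_enat_def field_simps l2_normsq_nonneg)
qed (simp add: inv_enat_def l2_normsq_nonneg)

lemma loewner_ge_tensor_frame_op:
  fixes a :: "'k \<Rightarrow> 'i \<Rightarrow> complex" and b :: "'k \<Rightarrow> 'j \<Rightarrow> complex"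
  assumes a: "hs_family a" and b: "hs_family b"
  defines "r \<equiv> inv_enat (min (op_rank (frame_op a)) (op_rank (frame_op b)))"
  shows "loewner_ge (tensor_op (frame_op a) (frame_op b))
                    (scale_op r (theta (tensor_diag a b) (tensor_diag a b)))"
  unfolding loewner_ge_def
proof (intro allI impI)
  fix w :: "'i \<times> 'j \<Rightarrow> complex" assume w: "l2 w"
  note theta = l2_inner_scale_op_theta[OF l2_inner_tensor_diag(1)[OF a b w]]
  have "l2_inner (\<lambda>p. tensor_op (frame_op a) (frame_op b) w p
                      - scale_op r (theta (tensor_diag a b) (tensor_diag a b)) w p) w
        = complex_of_real (l2_normsq (coeff_matrix a b w)
            - r * (cmod (infsum (\<lambda>k. coeff_matrix a b w (k, k)) UNIV))^2)"
    by (simp add: l2_inner_diff_left_summable l2_inner_tensor_frame_op[OF a b w] theta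
        l2_inner_tensor_diag(2)[OF a b w])
  then show "0 \<le> l2_inner (\<lambda>p. tensor_op (frame_op a) (frame_op b) w p
                              - scale_op r (theta (tensor_diag a b) (tensor_diag a b)) w p) w"
    using inv_min_rank_trace_bound[OF a b w] by (simp add: less_eq_complex_def r_def)
qed

lemma loewner_ge_scale_theta_zero:
  assumes "r \<ge> 0" "\<And>w. l2 w \<Longrightarrow> (\<lambda>p. w p * cnj (v p)) summable_on UNIV"
  shows "loewner_ge (scale_op r (theta v v)) zero_op"
  unfolding loewner_ge_def zero_op_def
  using l2_inner_scale_op_theta(2)[OF assms(2)] assms(1) by (simp add: less_eq_complex_def)

theorem loewner_bound:
  assumes A: "hs_op A" and B: "hs_op_conj B"
  shows "loewner_ge (tensor_op (AAs A) (BBs B))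
           (scale_op (inv_enat (min_rank A B)) (theta (vec (B \<circ> transp A)) (vec (B \<circ> transp A))))"
    and "loewner_ge (scale_op (inv_enat (min_rank A B)) (theta (vec (B \<circ> transp A)) (vec (B \<circ> transp A))))
           zero_op"
  unfolding tensor_op_AAs_BBs[OF A B] vec_comp_transp_eq_tensor_diag[OF A B]
    min_rank_eq_frame_op_ranks[OF A B]
  using hs_op_columns[OF A] hs_op_conj_columns[OF B]
  by (auto intro!: loewner_ge_tensor_frame_op loewner_ge_scale_theta_zero inv_enat_nonneg
      l2_inner_tensor_diag(1))

section \<open>Sharpness\<close>

definition conj_synthesis :: "('k \<Rightarrow> 'j \<Rightarrow> complex) \<Rightarrow> ('k \<Rightarrow> complex) \<Rightarrow> 'j \<Rightarrow> complex" where
  "conj_synthesis b x = synthesis b (\<lambda>k. cnj (x k))"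

lemma conj_synthesis_ket: "conj_synthesis b (ket k) = b k"
  unfolding conj_synthesis_def by (simp add: synthesis_ket)

lemma hs_op_conj_conj_synthesis:
  assumes b: "hs_family b" shows "hs_op_conj (conj_synthesis b)"
proof -
  note bounded = bounded_op_synthesis[OF b]
  obtain C where C: "\<And>x. l2 x \<Longrightarrow> l2_norm (synthesis b x) \<le> C * l2_norm x"
    using bounded unfolding bounded_op_def by blast
  have "bounded_op_conj (conj_synthesis b)"
    unfolding bounded_op_conj_def conj_synthesis_def
  proof (intro conjI allI impI exI)
    fix x y :: "'a \<Rightarrow> complex" and c assume x: "l2 x"
    show "l2 (synthesis b (\<lambda>k. cnj (x k)))" by (rule bounded_op_l2[OF bounded l2_cnj[OF x]])
    show "synthesis b (\<lambda>k. cnj (cnj c * x k)) = (\<lambda>p. c * synthesis b (\<lambda>k. cnj (x k)) p)"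
      using synthesis_scale[of b c "\<lambda>k. cnj (x k)"] by simp
    show "l2_norm (synthesis b (\<lambda>k. cnj (x k))) \<le> C * l2_norm x"
      using C[OF l2_cnj[OF x]] by (simp add: l2_norm_def)
    assume "l2 y"
    then show "synthesis b (\<lambda>k. cnj (x k + y k))
               = (\<lambda>p. synthesis b (\<lambda>k. cnj (x k)) p + synthesis b (\<lambda>k. cnj (y k)) p)"
      using synthesis_add[OF b l2_cnj[OF x] l2_cnj] by simp
  qed
  then show ?thesis
    using b unfolding hs_op_conj_def
    by (simp add: conj_synthesis_ket hs_family_def l2_norm_eq_sqrt_normsq l2_normsq_nonneg)
qed

lemma nonzero_op_synthesis: "c k \<noteq> (\<lambda>_. 0) \<Longrightarrow> nonzero_op (synthesis c)"
  unfolding nonzero_op_def by (intro exI[of _ "ket k"]) (simp add: synthesis_ket)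

lemma nonzero_op_conj_synthesis: "b k \<noteq> (\<lambda>_. 0) \<Longrightarrow> nonzero_op (conj_synthesis b)"
  unfolding nonzero_op_def by (intro exI[of _ "ket k"]) (simp add: conj_synthesis_ket)

lemma operators_of_hs_families:
  assumes a: "hs_family a" and b: "hs_family b"
  shows "hs_op (synthesis a)" and "hs_op_conj (conj_synthesis b)"
    and "min_rank (synthesis a) (conj_synthesis b) = min (op_rank (frame_op a)) (op_rank (frame_op b))"
    and "tensor_op (AAs (synthesis a)) (BBs (conj_synthesis b)) = tensor_op (frame_op a) (frame_op b)"
    and "vec (conj_synthesis b \<circ> transp (synthesis a)) = tensor_diag a b"
proof -
  show A: "hs_op (synthesis a)" by (rule hs_op_synthesis[OF a])
  show B: "hs_op_conj (conj_synthesis b)" by (rule hs_op_conj_conj_synthesis[OF b])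
  have columns: "(\<lambda>k. synthesis a (ket k)) = a" "(\<lambda>k. conj_synthesis b (ket k)) = b"
    by (simp_all add: synthesis_ket conj_synthesis_ket)
  show "min_rank (synthesis a) (conj_synthesis b) = min (op_rank (frame_op a)) (op_rank (frame_op b))"
    using min_rank_eq_frame_op_ranks[OF A B] unfolding columns .
  show "tensor_op (AAs (synthesis a)) (BBs (conj_synthesis b)) = tensor_op (frame_op a) (frame_op b)"
    using tensor_op_AAs_BBs[OF A B] unfolding columns .
  show "vec (conj_synthesis b \<circ> transp (synthesis a)) = tensor_diag a b"
    using vec_comp_transp_eq_tensor_diag[OF A B] unfolding columns .
qed

lemma lin_indep_singleton: "v \<noteq> (\<lambda>_. 0) \<Longrightarrow> lin_indep {v}"
  unfolding lin_indep_def by (auto simp: fun_eq_iff)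

lemma op_rank_frame_op_ge_1:
  assumes c: "hs_family c" and nz: "c k \<noteq> (\<lambda>_. 0)"
  shows "1 \<le> op_rank (frame_op c)"
proof -
  have lc: "l2 (c k)" by (rule hs_family_l2[OF c])
  have "frame_op c (c k) \<noteq> (\<lambda>_. 0)"
  proof
    assume "frame_op c (c k) = (\<lambda>_. 0)"
    then have "analysis c (c k) = (\<lambda>_. 0)"
      using lc unfolding frame_op_def
      by (intro synthesis_eq_0_on_analysis_range[OF c]) (auto simp: analysis_range_def)
    then have "complex_of_real (l2_normsq (c k)) = 0"
      unfolding l2_inner_self[symmetric] analysis_def by (metis fun_cong)
    then have "l2_normsq (c k) = 0" by simp
    with nz show False using l2_normsq_eq_0[OF lc] by blast
  qed
  then have "enat (card {frame_op c (c k)}) \<le> op_rank (frame_op c)"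
    using lc frame_op_l2[OF c lc] by (intro op_rank_ge_card lin_indep_singleton) auto
  then show ?thesis by (simp add: one_enat_def)
qed

lemma op_rank_le_card_range:
  fixes T :: "('a \<Rightarrow> complex) \<Rightarrow> 'i \<Rightarrow> complex"
  assumes "finite (UNIV :: 'i set)"
  shows "op_rank T \<le> enat (card (UNIV :: 'i set))"
  unfolding op_rank_def using lin_indep_card_le_support[OF _ assms] by (auto intro!: Sup_least)

lemma op_rank_frame_op_le_card_index:
  fixes c :: "'k \<Rightarrow> 'i \<Rightarrow> complex"
  assumes c: "hs_family c" and fin: "finite (UNIV :: 'k set)"
  shows "op_rank (frame_op c) \<le> enat (card (UNIV :: 'k set))"
proof -
  define V where "V = {synthesis c x |x. l2 x}"
  have V: "l2_subspace V"
    unfolding V_def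
    by (rule l2_subspace_linear_range) (auto simp: synthesis_l2(1)[OF c] synthesis_add[OF c] synthesis_scale)
  have span: "synthesis c x \<in> fun_vs.span (range c)" for x
  proof -
    have "synthesis c x = (\<Sum>k\<in>UNIV. (\<lambda>i. x k * c k i))"
      unfolding synthesis_def using fin by (auto simp: fun_eq_iff sum_fun_apply)
    also have "\<dots> \<in> fun_vs.span (range c)"
      by (intro fun_vs.span_sum fun_vs.span_scale fun_vs.span_base) auto
    finally show ?thesis .
  qed
  have dim: "dim_at_most V (card (UNIV :: 'k set))"
    unfolding dim_at_most_def
  proof (intro allI impI)
    fix S assume "S \<subseteq> V" "lin_indep S"
    then have "card S \<le> card (range c)"
      using fin span by (intro lin_indep_card_le_span) (auto simp: V_def)
    also have "\<dots> \<le> card (UNIV :: 'k set)" by (rule card_image_le[OF fin])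
    finally show "card S \<le> card (UNIV :: 'k set)" .
  qed
  have "l2_closure {frame_op c x |x. l2 x} \<subseteq> l2_closure V"
    unfolding l2_closure_def V_def frame_op_def using analysis_l2[OF c] by blast
  also have "\<dots> \<subseteq> V" by (rule l2_closure_finite_dim_subspace[OF V dim])
  finally show ?thesis
    using dim unfolding op_rank_def dim_at_most_def by (auto intro!: Sup_least)
qed

lemma l2_closure_support:
  assumes "x \<in> l2_closure V" "\<And>y. y \<in> V \<Longrightarrow> l2 y" "\<And>y. y \<in> V \<Longrightarrow> y i = 0"
  shows "x i = 0"
proof (rule ccontr)
  assume "x i \<noteq> 0"
  then have "cmod (x i) > 0" by simp
  then obtain y where y: "y \<in> V" "l2_norm (\<lambda>j. x j - y j) < cmod (x i)"
    using assms(1) unfolding l2_closure_def by blast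
  have "cmod (x i - y i) \<le> sqrt (l2_normsq (\<lambda>j. x j - y j))"
    using assms(1) assms(2)[OF y(1)] by (intro l2_coord_le l2_diff) (auto simp: l2_closure_def)
  with y assms(3)[OF y(1)] show False by (simp add: l2_norm_eq_sqrt_normsq)
qed

text \<open>The columns of a diagonal operator with singular values \<open>\<sigma>\<close>, sending \<open>e\<^bsub>g t\<^esub>\<close> to
  \<open>\<sigma> t e\<^bsub>h t\<^esub>\<close>.\<close>

definition diag_family ::
    "nat set \<Rightarrow> (nat \<Rightarrow> 'k) \<Rightarrow> (nat \<Rightarrow> 'i) \<Rightarrow> (nat \<Rightarrow> real) \<Rightarrow> 'k \<Rightarrow> 'i \<Rightarrow> complex" where
  "diag_family D g h \<sigma> k =
     (if k \<in> g ` D then (\<lambda>i. complex_of_real (\<sigma> (the_inv_into D g k)) * ket (h (the_inv_into D g k)) i)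
      else (\<lambda>_. 0))"

context
  fixes D :: "nat set" and g :: "nat \<Rightarrow> 'k" and h :: "nat \<Rightarrow> 'i" and \<sigma> :: "nat \<Rightarrow> real"
  assumes g: "inj_on g D" and h: "inj_on h D" and \<sigma>_pos: "\<And>t. t \<in> D \<Longrightarrow> \<sigma> t > 0"
    and \<sigma>_summable: "(\<lambda>t. (\<sigma> t)^2) summable_on D"
begin

lemma diag_family_image:
  "t \<in> D \<Longrightarrow> diag_family D g h \<sigma> (g t) = (\<lambda>i. complex_of_real (\<sigma> t) * ket (h t) i)"
  unfolding diag_family_def using the_inv_into_f_f[OF g] by auto

lemma diag_family_coord:
  assumes t: "t \<in> D"
  shows "diag_family D g h \<sigma> k (h t) = (if k = g t then complex_of_real (\<sigma> t) else 0)"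
proof (cases "k \<in> g ` D")
  case True
  then obtain s where s: "s \<in> D" "k = g s" by auto
  have "h s = h t \<longleftrightarrow> s = t" "g s = g t \<longleftrightarrow> s = t"
    using g h s(1) t by (auto dest: inj_onD)
  then show ?thesis using s diag_family_image[OF s(1)] by (auto simp: ket_def)
next
  case False
  then show ?thesis using t by (auto simp: diag_family_def)
qed

lemma diag_family_support: "i \<notin> h ` D \<Longrightarrow> diag_family D g h \<sigma> k i = 0"
  unfolding diag_family_def
  by (auto simp: ket_def dest!: the_inv_into_into[OF g, of k D, simplified])

lemma hs_family_diag_family: "hs_family (diag_family D g h \<sigma>)"
  unfolding hs_family_def
proof (intro conjI allI)
  show "l2 (diag_family D g h \<sigma> k)" for k
    unfolding diag_family_def by (auto intro: l2_scale)
  have normsq: "l2_normsq (diag_family D g h \<sigma> k)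
                = (if k \<in> g ` D then (\<sigma> (the_inv_into D g k))^2 else 0)" for k
    unfolding diag_family_def by (auto simp: l2_normsq_scale l2_normsq_def[of "\<lambda>_. 0"])
  have "((\<lambda>k. l2_normsq (diag_family D g h \<sigma> k)) \<circ> g) summable_on D"
    using \<sigma>_summable by (rule summable_on_cong[THEN iffD1, rotated])
                         (auto simp: normsq the_inv_into_f_f[OF g])
  then have "(\<lambda>k. l2_normsq (diag_family D g h \<sigma> k)) summable_on g ` D"
    using summable_on_reindex[OF g] by blast
  then show "(\<lambda>k. l2_normsq (diag_family D g h \<sigma> k)) summable_on UNIV"
    by (rule summable_on_cong_neutral[THEN iffD1, rotated -1]) (auto simp: normsq)
qed

lemma frame_op_diag_family_ket:
  assumes t: "t \<in> D"
  shows "frame_op (diag_family D g h \<sigma>) (ket (h t)) = (\<lambda>i. complex_of_real ((\<sigma> t)^2) * ket (h t) i)"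
proof
  fix i
  have analysis: "analysis (diag_family D g h \<sigma>) (ket (h t)) k
                  = (if k = g t then complex_of_real (\<sigma> t) else 0)" for k
    unfolding analysis_def l2_inner_ket_left diag_family_coord[OF t] by simp
  have "frame_op (diag_family D g h \<sigma>) (ket (h t)) i
        = infsum (\<lambda>k. analysis (diag_family D g h \<sigma>) (ket (h t)) k * diag_family D g h \<sigma> k i) {g t}"
    unfolding frame_op_def synthesis_def by (rule infsum_cong_neutral) (auto simp: analysis)
  then show "frame_op (diag_family D g h \<sigma>) (ket (h t)) i = complex_of_real ((\<sigma> t)^2) * ket (h t) i"
    by (simp add: analysis diag_family_image[OF t] power2_eq_square)
qed

lemma enat_card_le_op_rank_frame_op_diag_family:
  assumes E: "finite E" "E \<subseteq> D"
  shows "enat (card E) \<le> op_rank (frame_op (diag_family D g h \<sigma>))"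
proof -
  have inj: "inj_on (\<lambda>t. ket (h t)) E"
    using inj_on_subset[OF h E(2)] by (auto simp: inj_on_def ket_eq_iff)
  have "l2_orthonormal ((\<lambda>t. ket (h t)) ` E)"
    unfolding l2_orthonormal_def by (auto simp: l2_inner_ket_right ket_eq_iff) (auto simp: ket_def)
  then have "lin_indep ((\<lambda>t. ket (h t)) ` E)"
    using E(1) by (intro l2_orthonormal_lin_indep) auto
  moreover have
    "ket (h t) = frame_op (diag_family D g h \<sigma>) (\<lambda>i. complex_of_real (1 / (\<sigma> t)^2) * ket (h t) i)"
    if "t \<in> E" for t
  proof -
    have "t \<in> D" using that E(2) by blast
    then have "frame_op (diag_family D g h \<sigma>) (\<lambda>i. complex_of_real (1 / (\<sigma> t)^2) * ket (h t) i)
               = (\<lambda>i. complex_of_real (1 / (\<sigma> t)^2) * (complex_of_real ((\<sigma> t)^2) * ket (h t) i))"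
      by (simp only: frame_op_scale frame_op_diag_family_ket)
    also have "\<dots> = ket (h t)"
      using \<sigma>_pos[OF \<open>t \<in> D\<close>] by (simp add: fun_eq_iff)
    finally show ?thesis by simp
  qed
  then have "(\<lambda>t. ket (h t)) ` E \<subseteq> {frame_op (diag_family D g h \<sigma>) x |x. l2 x}"
    by (blast intro: l2_scale l2_ket)
  ultimately have "enat (card ((\<lambda>t. ket (h t)) ` E)) \<le> op_rank (frame_op (diag_family D g h \<sigma>))"
    by (intro op_rank_ge_card) auto
  then show ?thesis using card_image[OF inj] by simp
qed

lemma op_rank_frame_op_diag_family:
  "op_rank (frame_op (diag_family D g h \<sigma>)) = (if finite D then enat (card D) else \<infinity>)"
proof (cases "finite D")
  case True
  have "op_rank (frame_op (diag_family D g h \<sigma>)) \<le> enat (card D)"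
    unfolding op_rank_def
  proof (rule Sup_least, clarify)
    fix S assume S: "S \<subseteq> l2_closure {frame_op (diag_family D g h \<sigma>) x |x. l2 x}" "lin_indep S"
    have "x i = 0" if "x \<in> S" "i \<notin> h ` D" for x i
      using S(1) that frame_op_l2[OF hs_family_diag_family]
      by (intro l2_closure_support[of x]) (auto simp: frame_op_def synthesis_def diag_family_support)
    then have "card S \<le> card (h ` D)"
      using True by (intro lin_indep_card_le_support[OF S(2)]) auto
    then show "enat (card S) \<le> enat (card D)" using card_image[OF h] by simp
  qed
  with True show ?thesis
    using enat_card_le_op_rank_frame_op_diag_family[of D] by simp
next
  case False
  have unbounded: "enat N \<le> op_rank (frame_op (diag_family D g h \<sigma>))" for N
    using infinite_arbitrarily_large[OF False, of N] enat_card_le_op_rank_frame_op_diag_family by blast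
  show ?thesis
  proof (cases "op_rank (frame_op (diag_family D g h \<sigma>))")
    case (enat m)
    with unbounded[of "Suc m"] show ?thesis by simp
  qed (simp add: False)
qed

end

definition diag_witness :: "nat set \<Rightarrow> (nat \<Rightarrow> 'i) \<Rightarrow> (nat \<Rightarrow> 'j) \<Rightarrow> (nat \<Rightarrow> real) \<Rightarrow> 'i \<times> 'j \<Rightarrow> complex"
  where "diag_witness E h h' \<sigma> = (\<lambda>p. \<Sum>t\<in>E. complex_of_real (1 / (\<sigma> t)^2) * ket (h t, h' t) p)"

context
  fixes D :: "nat set" and g :: "nat \<Rightarrow> 'k" and h :: "nat \<Rightarrow> 'i" and h' :: "nat \<Rightarrow> 'j"
    and \<sigma> :: "nat \<Rightarrow> real" and E :: "nat set"
    and a :: "'k \<Rightarrow> 'i \<Rightarrow> complex" and b :: "'k \<Rightarrow> 'j \<Rightarrow> complex" and w :: "'i \<times> 'j \<Rightarrow> complex"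
  assumes g: "inj_on g D" and h: "inj_on h D" and h': "inj_on h' D"
    and \<sigma>_pos: "\<And>t. t \<in> D \<Longrightarrow> \<sigma> t > 0" and \<sigma>_summable: "(\<lambda>t. (\<sigma> t)^2) summable_on D"
    and E: "finite E" "E \<subseteq> D"
    and a_def: "a = diag_family D g h \<sigma>" and b_def: "b = diag_family D g h' \<sigma>"
    and w_def: "w = diag_witness E h h' \<sigma>"
begin

lemma hs_family_diag_families: "hs_family a" "hs_family b"
  unfolding a_def b_def
  using hs_family_diag_family[OF g h \<sigma>_pos \<sigma>_summable] hs_family_diag_family[OF g h' \<sigma>_pos \<sigma>_summable]
  by auto

lemma l2_diag_witness: "l2 w"
  unfolding w_def diag_witness_def using E(1) by (intro l2_sum l2_scale l2_ket)

lemma coeff_matrix_diag_witness: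
  "coeff_matrix a b w (k, l) = (if \<exists>t\<in>E. k = g t \<and> l = g t then 1 else 0)"
proof -
  have entry: "complex_of_real (1 / (\<sigma> t)^2) * l2_inner (ket (h t, h' t)) (tensor_family a b (k, l))
               = (if k = g t \<and> l = g t then 1 else 0)" if "t \<in> E" for t
  proof -
    have t: "t \<in> D" using that E(2) by blast
    have "tensor_family a b (k, l) (h t, h' t)
          = (if k = g t \<and> l = g t then complex_of_real ((\<sigma> t)^2) else 0)"
      using diag_family_coord[OF g h \<sigma>_pos \<sigma>_summable t, of k]
        diag_family_coord[OF g h' \<sigma>_pos \<sigma>_summable t, of l]
      by (simp add: a_def b_def tensor_family_def power2_eq_square)
    then show ?thesis using \<sigma>_pos[OF t] by (simp add: l2_inner_ket_left)
  qed
  have "coeff_matrix a b w (k, l)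
        = (\<Sum>t\<in>E. complex_of_real (1 / (\<sigma> t)^2) * l2_inner (ket (h t, h' t)) (tensor_family a b (k, l)))"
    unfolding coeff_matrix_def w_def diag_witness_def
    using E(1) l2_tensor_family[OF hs_family_diag_families] by (intro l2_inner_sum_left) auto
  also have "\<dots> = (\<Sum>t\<in>E. if k = g t \<and> l = g t then 1 else 0)"
    by (rule sum.cong[OF refl entry])
  also have "\<dots> = (if \<exists>t\<in>E. k = g t \<and> l = g t then 1 else 0)"
  proof (cases "\<exists>t\<in>E. k = g t \<and> l = g t")
    case True
    then obtain t0 where t0: "t0 \<in> E" "k = g t0" "l = g t0" by blast
    have "k = g t \<and> l = g t \<longleftrightarrow> t = t0" if "t \<in> E" for t
      using t0 that E(2) g by (auto dest: inj_onD)
    then have "(\<Sum>t\<in>E. if k = g t \<and> l = g t then 1 else 0) = (\<Sum>t\<in>E. if t = t0 then 1 else (0::complex))"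
      by (intro sum.cong) auto
    with True t0(1) E(1) show ?thesis by simp
  qed (auto intro: sum.neutral)
  finally show ?thesis .
qed

lemma l2_normsq_coeff_matrix_diag_witness: "l2_normsq (coeff_matrix a b w) = real (card E)"
proof -
  have inj: "inj_on (\<lambda>t. (g t, g t)) E"
    using g E(2) by (auto simp: inj_on_def)
  have "l2_normsq (coeff_matrix a b w) = infsum (\<lambda>kl. if kl \<in> (\<lambda>t. (g t, g t)) ` E then 1 else 0) UNIV"
    unfolding l2_normsq_def by (rule infsum_cong) (auto simp: coeff_matrix_diag_witness)
  also have "\<dots> = real (card ((\<lambda>t. (g t, g t)) ` E))"
    using E(1) by (subst infsum_cong_neutral[where T="(\<lambda>t. (g t, g t)) ` E"]) auto
  finally show ?thesis using card_image[OF inj] by simp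
qed

lemma trace_coeff_matrix_diag_witness: "infsum (\<lambda>k. coeff_matrix a b w (k, k)) UNIV = of_nat (card E)"
proof -
  have "infsum (\<lambda>k. coeff_matrix a b w (k, k)) UNIV = infsum (\<lambda>k. if k \<in> g ` E then 1 else 0) UNIV"
    by (rule infsum_cong) (auto simp: coeff_matrix_diag_witness)
  also have "\<dots> = of_nat (card (g ` E))"
    using E(1) by (subst infsum_cong_neutral[where T="g ` E"]) auto
  finally show ?thesis using card_image[OF inj_on_subset[OF g E(2)]] by simp
qed

lemma not_loewner_ge_diag_families:
  assumes "E \<noteq> {}" and c: "c * real (card E) > 1"
  shows "\<not> loewner_ge (tensor_op (frame_op a) (frame_op b))
                        (scale_op c (theta (tensor_diag a b) (tensor_diag a b)))"
proof
  note families = hs_family_diag_families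
  note theta = l2_inner_scale_op_theta[OF l2_inner_tensor_diag(1)[OF families l2_diag_witness]]
  assume "loewner_ge (tensor_op (frame_op a) (frame_op b))
                     (scale_op c (theta (tensor_diag a b) (tensor_diag a b)))"
  then have "0 \<le> l2_inner (\<lambda>p. tensor_op (frame_op a) (frame_op b) w p
                               - scale_op c (theta (tensor_diag a b) (tensor_diag a b)) w p) w"
    unfolding loewner_ge_def using l2_diag_witness by blast
  also have "\<dots> = complex_of_real (real (card E) - c * (real (card E))^2)"
    by (simp add: l2_inner_diff_left_summable l2_inner_tensor_frame_op[OF families l2_diag_witness]
        theta l2_inner_tensor_diag(2)[OF families l2_diag_witness]
        l2_normsq_coeff_matrix_diag_witness trace_coeff_matrix_diag_witness)
  finally have "c * real (card E) * real (card E) \<le> real (card E)"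
    by (simp add: less_eq_complex_def power2_eq_square)
  moreover have "card E > 0" using E(1) assms(1) by (simp add: card_gt_0_iff)
  ultimately show False using c by (simp add: mult_le_cancel_right2)
qed

end

lemma diag_families_counterexample:
  fixes g :: "nat \<Rightarrow> 'k" and h :: "nat \<Rightarrow> 'i" and h' :: "nat \<Rightarrow> 'j" and \<sigma> :: "nat \<Rightarrow> real"
  assumes g: "inj_on g D" and h: "inj_on h D" and h': "inj_on h' D"
    and \<sigma>_pos: "\<And>t. t \<in> D \<Longrightarrow> \<sigma> t > 0" and \<sigma>_summable: "(\<lambda>t. (\<sigma> t)^2) summable_on D"
    and E: "finite E" "E \<subseteq> D" "E \<noteq> {}" and c: "c * real (card E) > 1"
  shows "\<exists>(A :: ('k \<Rightarrow> complex) \<Rightarrow> ('i \<Rightarrow> complex)) (B :: ('k \<Rightarrow> complex) \<Rightarrow> ('j \<Rightarrow> complex)).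
           hs_op A \<and> hs_op_conj B \<and> nonzero_op A \<and> nonzero_op B \<and>
           min_rank A B = (if finite D then enat (card D) else \<infinity>) \<and>
           \<not> loewner_ge (tensor_op (AAs A) (BBs B))
                          (scale_op c (theta (vec (B \<circ> transp A)) (vec (B \<circ> transp A))))"
proof -
  define a where "a = diag_family D g h \<sigma>"
  define b where "b = diag_family D g h' \<sigma>"
  note families = hs_family_diag_families[OF g h h' \<sigma>_pos \<sigma>_summable E(1,2) a_def b_def refl]
  note ops = operators_of_hs_families[OF families]
  obtain t where t: "t \<in> D" using E by blast
  have "ket (h t) \<noteq> (\<lambda>_. 0)" "ket (h' t) \<noteq> (\<lambda>_. 0)" by (auto simp: ket_def fun_eq_iff)
  then have "a (g t) \<noteq> (\<lambda>_. 0)" "b (g t) \<noteq> (\<lambda>_. 0)"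
    using \<sigma>_pos[OF t] unfolding a_def b_def
    by (auto simp: diag_family_image[OF g h \<sigma>_pos \<sigma>_summable t]
        diag_family_image[OF g h' \<sigma>_pos \<sigma>_summable t] fun_eq_iff)
  moreover have "min (op_rank (frame_op a)) (op_rank (frame_op b)) = (if finite D then enat (card D) else \<infinity>)"
    using op_rank_frame_op_diag_family[OF g h \<sigma>_pos \<sigma>_summable]
      op_rank_frame_op_diag_family[OF g h' \<sigma>_pos \<sigma>_summable] by (simp add: a_def b_def)
  moreover have "\<not> loewner_ge (tensor_op (frame_op a) (frame_op b))
                                (scale_op c (theta (tensor_diag a b) (tensor_diag a b)))"
    by (rule not_loewner_ge_diag_families[OF g h h' \<sigma>_pos \<sigma>_summable E(1,2) a_def b_def refl E(3) c])
  ultimately show ?thesis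
    using ops nonzero_op_synthesis nonzero_op_conj_synthesis by metis
qed

definition rank_domain :: "enat \<Rightarrow> nat set" where
  "rank_domain m = (case m of enat n \<Rightarrow> {..<n} | \<infinity> \<Rightarrow> UNIV)"

lemma enat_card_rank_domain:
  "(if finite (rank_domain m) then enat (card (rank_domain m)) else \<infinity>) = m"
  by (cases m) (auto simp: rank_domain_def)

lemma exists_inj_on_rank_domain:
  assumes "finite (UNIV :: 'a set) \<Longrightarrow> m \<le> enat (card (UNIV :: 'a set))"
  shows "\<exists>f :: nat \<Rightarrow> 'a. inj_on f (rank_domain m)"
proof (cases "finite (UNIV :: 'a set)")
  case True
  then obtain n where m: "m = enat n" "n \<le> card (UNIV :: 'a set)"
    using assms by (cases m) auto
  obtain f :: "nat \<Rightarrow> 'a" where "bij_betw f {0..<card (UNIV :: 'a set)} UNIV"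
    using ex_bij_betw_nat_finite[OF True] by blast
  then have "inj_on f {..<n}"
    by (rule inj_on_subset[OF bij_betw_imp_inj_on]) (use m in auto)
  then show ?thesis using m by (auto simp: rank_domain_def)
next
  case False
  then obtain f :: "nat \<Rightarrow> 'a" where "inj f" using infinite_countable_subset by blast
  then show ?thesis by (meson inj_on_subset subset_UNIV)
qed

lemma exists_large_subset_rank_domain:
  assumes m: "1 \<le> m" and c: "c > inv_enat m"
  obtains E where "finite E" "E \<subseteq> rank_domain m" "E \<noteq> {}" "c * real (card E) > 1"
proof (cases m)
  case (enat n)
  with m have "n \<ge> 1" by (simp add: one_enat_def)
  with enat c show ?thesis
    by (intro that[of "{..<n}"]) (auto simp: rank_domain_def inv_enat_def field_simps lessThan_empty_iff)
next
  case infinity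
  then have "c > 0" using c by (simp add: inv_enat_def)
  obtain N :: nat where N: "1 / c < real N" using reals_Archimedean2 by blast
  with \<open>c > 0\<close> have "N \<ge> 1" by (cases N) (auto simp: field_simps)
  with N \<open>c > 0\<close> infinity show ?thesis
    by (intro that[of "{..<N}"]) (auto simp: rank_domain_def field_simps lessThan_empty_iff)
qed

lemma summable_on_geometric_sq: "(\<lambda>t. (((1::real) / 2)^t)^2) summable_on D"
proof -
  have "(\<lambda>t. ((1::real) / 4)^t) summable_on UNIV"
    by (rule summable_nonneg_imp_summable_on) (auto intro: summable_geometric)
  then have "(\<lambda>t. ((1::real) / 4)^t) summable_on D"
    by (rule summable_on_subset_banach) simp
  then show ?thesis by (simp add: power_mult_distrib[symmetric] power2_eq_square flip: power_mult)
qed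

theorem loewner_bound_sharp:
  fixes A0 :: "('k \<Rightarrow> complex) \<Rightarrow> ('i \<Rightarrow> complex)" and B0 :: "('k \<Rightarrow> complex) \<Rightarrow> ('j \<Rightarrow> complex)"
  assumes A0: "hs_op A0" "nonzero_op A0" and B0: "hs_op_conj B0" "nonzero_op B0"
    and c: "c > inv_enat (min_rank A0 B0)"
  shows "\<exists>(A :: ('k \<Rightarrow> complex) \<Rightarrow> ('i \<Rightarrow> complex)) (B :: ('k \<Rightarrow> complex) \<Rightarrow> ('j \<Rightarrow> complex)).
           hs_op A \<and> hs_op_conj B \<and> nonzero_op A \<and> nonzero_op B \<and> min_rank A B = min_rank A0 B0 \<and>
           \<not> loewner_ge (tensor_op (AAs A) (BBs B))
                          (scale_op c (theta (vec (B \<circ> transp A)) (vec (B \<circ> transp A))))"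
proof -
  define m where "m = min_rank A0 B0"
  note a0 = hs_op_columns[OF A0(1)] and b0 = hs_op_conj_columns[OF B0(1)]
  have m_eq: "m = min (op_rank (frame_op (\<lambda>k. A0 (ket k)))) (op_rank (frame_op (\<lambda>k. B0 (ket k))))"
    unfolding m_def by (rule min_rank_eq_frame_op_ranks[OF A0(1) B0(1)])
  have "1 \<le> m"
    using op_rank_frame_op_ge_1[OF a0] op_rank_frame_op_ge_1[OF b0]
      hs_op_nonzero_column[OF A0] hs_op_conj_nonzero_column[OF B0]
    unfolding m_eq by auto
  have m_le: "m \<le> op_rank (frame_op (\<lambda>k. A0 (ket k)))" "m \<le> op_rank (frame_op (\<lambda>k. B0 (ket k)))"
    unfolding m_eq by simp_all
  obtain g :: "nat \<Rightarrow> 'k" where g: "inj_on g (rank_domain m)"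
    using exists_inj_on_rank_domain m_le(1) op_rank_frame_op_le_card_index[OF a0] by (meson order_trans)
  obtain h :: "nat \<Rightarrow> 'i" where h: "inj_on h (rank_domain m)"
    using exists_inj_on_rank_domain m_le(1) op_rank_le_card_range by (meson order_trans)
  obtain h' :: "nat \<Rightarrow> 'j" where h': "inj_on h' (rank_domain m)"
    using exists_inj_on_rank_domain m_le(2) op_rank_le_card_range by (meson order_trans)
  obtain E where E: "finite E" "E \<subseteq> rank_domain m" "E \<noteq> {}" and cE: "c * real (card E) > 1"
    using exists_large_subset_rank_domain[OF \<open>1 \<le> m\<close>] c unfolding m_def by blast
  show ?thesis
    using diag_families_counterexample[OF g h h' _ summable_on_geometric_sq E cE]
    unfolding enat_card_rank_domain m_def by simp
qed

theorem theorem1p5: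
  shows
  "(\<forall>(A :: ('k \<Rightarrow> complex) \<Rightarrow> ('i \<Rightarrow> complex)) (B :: ('k \<Rightarrow> complex) \<Rightarrow> ('j \<Rightarrow> complex)).
      hs_op A \<and> hs_op_conj B \<and> nonzero_op A \<and> nonzero_op B \<longrightarrow>
        loewner_ge (tensor_op (AAs A) (BBs B))
                   (scale_op (inv_enat (min_rank A B)) (theta (vec (B \<circ> transp A)) (vec (B \<circ> transp A))))
      \<and> loewner_ge (scale_op (inv_enat (min_rank A B)) (theta (vec (B \<circ> transp A)) (vec (B \<circ> transp A))))
                   zero_op)
   \<and>
   (\<forall>m. (\<exists>(A :: ('k \<Rightarrow> complex) \<Rightarrow> ('i \<Rightarrow> complex)) (B :: ('k \<Rightarrow> complex) \<Rightarrow> ('j \<Rightarrow> complex)).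
            hs_op A \<and> hs_op_conj B \<and> nonzero_op A \<and> nonzero_op B \<and> min_rank A B = m) \<longrightarrow>
        (\<forall>c. c > inv_enat m \<longrightarrow>
           (\<exists>(A :: ('k \<Rightarrow> complex) \<Rightarrow> ('i \<Rightarrow> complex)) (B :: ('k \<Rightarrow> complex) \<Rightarrow> ('j \<Rightarrow> complex)).
              hs_op A \<and> hs_op_conj B \<and> nonzero_op A \<and> nonzero_op B \<and> min_rank A B = m \<and>
              \<not> loewner_ge (tensor_op (AAs A) (BBs B))
                     (scale_op c (theta (vec (B \<circ> transp A)) (vec (B \<circ> transp A)))))))"
proof (intro conjI allI impI)
  fix A :: "('k \<Rightarrow> complex) \<Rightarrow> ('i \<Rightarrow> complex)" and B :: "('k \<Rightarrow> complex) \<Rightarrow> ('j \<Rightarrow> complex)"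
  assume "hs_op A \<and> hs_op_conj B \<and> nonzero_op A \<and> nonzero_op B"
  then show "loewner_ge (tensor_op (AAs A) (BBs B))
               (scale_op (inv_enat (min_rank A B)) (theta (vec (B \<circ> transp A)) (vec (B \<circ> transp A))))"
    and "loewner_ge (scale_op (inv_enat (min_rank A B)) (theta (vec (B \<circ> transp A)) (vec (B \<circ> transp A))))
           zero_op"
    using loewner_bound by blast+
next
  fix m and c :: real
  assume "\<exists>(A :: ('k \<Rightarrow> complex) \<Rightarrow> ('i \<Rightarrow> complex)) (B :: ('k \<Rightarrow> complex) \<Rightarrow> ('j \<Rightarrow> complex)).
            hs_op A \<and> hs_op_conj B \<and> nonzero_op A \<and> nonzero_op B \<and> min_rank A B = m"
    and "c > inv_enat m"
  then show "\<exists>(A :: ('k \<Rightarrow> complex) \<Rightarrow> ('i \<Rightarrow> complex)) (B :: ('k \<Rightarrow> complex) \<Rightarrow> ('j \<Rightarrow> complex)).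
               hs_op A \<and> hs_op_conj B \<and> nonzero_op A \<and> nonzero_op B \<and> min_rank A B = m \<and>
               \<not> loewner_ge (tensor_op (AAs A) (BBs B))
                      (scale_op c (theta (vec (B \<circ> transp A)) (vec (B \<circ> transp A))))"
    using loewner_bound_sharp by blast
qed

end
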